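(* Consider a solution $(\Sigma_+(\tau),\mathcal{R}_1(\tau),\mathcal{R}_2(\tau),M(\tau),\psi(\tau),v(\tau))$, defined for all $\tau\ge\tau_0$, of the system \begin{align*} \Sigma_+' &= -(1-\Sigma_+^2)\Sigma_+ - \mathcal{R}_1 + (1+\Sigma_+)\mathcal{R}_2\cos 2\psi - \frac{4\Omega v^2}{3+v^2},\\ \mathcal{R}_1' &= 2\big[(1+\Sigma_+)\Sigma_+ + \mathcal{R}_2\cos 2\psi\big]\mathcal{R}_1 - 2(1+\Sigma_+)(\cos 2\psi)\mathcal{R}_2,\\ \mathcal{R}_2' &= 2\big[(1+\Sigma_+)\Sigma_+ + \mathcal{R}_2\cos 2\psi\big]\mathcal{R}_2 - 2(1+\Sigma_+)(\cos 2\psi)\mathcal{R}_1,\\ M' &= -\big[(1+\Sigma_+)^2 + \mathcal{R}_2\cos 2\psi + 3\mathcal{R}_2 M\sin 2\psi\big]M,\\ \psi' &= \frac{2}{M} + (1+\Sigma_+)\frac{\mathcal{R}_1}{\mathcal{R}_2}\sin 2\psi,\\ v' &= \frac{6}{3-v^2}\Sigma_+(1-v^2)v, \end{align*} subject to the constraint \[ \mathcal{R}_1^2-\mathcal{R}_2^2-\left(\frac{4\Omega v}{3+v^2}\right)^2=0, \] where $\Omega := 1-\Sigma_+^2-\mathcal{R}_1$ and $'$ denotes $d/d\tau$. Suppose the solution satisfies $\Omega>0$, $\mathcal{R}_1>0$ and $\mathcal{R}_2>0$ for all $\tau\ge\tau_0$. Then \[ \lim_{\tau\to+\infty}(\Sigma_+,\mathcal{R}_1,\mathcal{R}_2,v,M)=(0,0,0,0,0),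 \] and moreover \[ \lim_{\tau\to+\infty}\frac{\mathcal{R}_1}{M^2}=+\infty,\qquad \lim_{\tau\to+\infty}\frac{\mathcal{R}_2}{M^2}=+\infty. \]
   Context: This system describes spatially homogeneous Bianchi type VII$_0$ cosmologies with a tilted irrotational radiation perfect fluid (equation of state $\tilde p=\tfrac13\tilde\rho$), zero cosmological constant, in Hubble-normalized variables with dimensionless time $\tau$ ($dt/d\tau=1/H$, $H$ the Hubble scalar). Here $\Sigma_+$ is a Hubble-normalized shear component, $v\in(-1,1)$ is the tilt, $\Omega$ is the density parameter, and $\mathcal{R}_1,\mathcal{R}_2,\psi$ are defined from the Hubble-normalized shear components $\Sigma_-,\Sigma_\times$ and curvature components $N_-,N_\times$ by $\mathcal{R}_1=\Sigma_-^2+\Sigma_\times^2+N_-^2+N_\times^2$, $\mathcal{R}_2\cos2\psi=\Sigma_-^2+\Sigma_\times^2-N_-^2-N_\times^2$, $\mathcal{R}_2\sin2\psi=2(\Sigma_-N_-+\Sigma_\times N_\times)$. The variable $M=1/N_+$, where $N_+$ is the remaining Hubble-normalized spatial curvature variable; for these cosmologies (with $\Omega>0$) it is a known standing fact, used by the paper, that $N_+\to+\infty$, i.e. $M\to0^+$, as $\tau\to+\infty$. *)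

theory Defs
  imports "HOL-Analysis.Analysis"
begin

definition Omg :: "real \<Rightarrow> real \<Rightarrow> real" where
  "Omg s r1 = 1 - s^2 - r1"

end

theory Submission
  imports Defs
begin

text \<open>Write \<open>X + i Y = R2 e\<^sup>2\<^sup>i\<^sup>\<psi>\<close>, \<open>p = X / R1\<close> and \<open>q = Y / R1\<close>. As \<open>M \<rightarrow> 0\<close>, the angle \<open>2\<psi>\<close>
  turns with speed \<open>4 / M \<rightarrow> \<infinity>\<close>, so the terms linear in \<open>X\<close> and \<open>Y\<close> average out: each of them
  is the derivative of a correction of size \<open>O(M)\<close> up to errors of size \<open>O(M)\<close>.

  \<^item> \<open>Sp\<close> stays below some \<open>m < 1\<close>. The function \<open>ln (Om (1 - v\<^sup>2)\<^sup>1\<^sup>/\<^sup>3 / (3 + v\<^sup>2))\<close> has derivative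
    \<open>2 Sp\<^sup>2 + 2 X\<close>; after removing the oscillation and subtracting \<open>8 exp (Lam (-1)) \<approx> 8 M R1\<close>
    it becomes a bounded function with derivative \<open>\<ge> 2 Sp\<^sup>2\<close>, and a Barbalat-type argument
    gives \<open>Sp \<rightarrow> 0\<close>.
  \<^item> Averaging \<open>Sp' = - R1 + (1 + Sp) X + \<dots>\<close> in the same way gives \<open>R1 \<rightarrow> 0\<close>; the constraint
    then yields \<open>R2 \<le> R1\<close> and \<open>Om |v| \<le> R1\<close>, hence \<open>R2 \<rightarrow> 0\<close> and \<open>v \<rightarrow> 0\<close>.
  \<^item> \<open>Lam a \<approx> ln (R1 / M\<^sup>a)\<close> has derivative close to \<open>a\<close>, so \<open>R1 / M\<^sup>a \<rightarrow> \<infinity>\<close> for \<open>1 \<le> a \<le> 2\<close>.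
  \<^item> \<open>(p, q)\<close> circles around a slowly moving centre \<open>(cp, cq) \<approx> (0, - M / 2)\<close>. The squared
    distance \<open>zeta\<close>, measured in units of \<open>M\<^sup>2\<close>, increases whenever it lies in \<open>[1/16, 4]\<close>, so
    eventually it stays on one side of this band; either way \<open>max |p| |q| \<ge> M / 8\<close>, that is
    \<open>R2 \<ge> R1 M / 8\<close>, and \<open>R2 / M\<^sup>2 \<rightarrow> \<infinity>\<close> follows from \<open>R1 / M \<rightarrow> \<infinity>\<close>.\<close>

section \<open>Scalar differential inequalities\<close>

lemma abs_mult_le:
  fixes a b :: "'a::linordered_idom"
  assumes "\<bar>a\<bar> \<le> A" "\<bar>b\<bar> \<le> B"
  shows "\<bar>a * b\<bar> \<le> A * B"
  unfolding abs_mult using assms by (intro mult_mono) (auto intro: order_trans[OF abs_ge_zero])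

lemma DERIV_ge_imp_ge_linear:
  fixes f Df :: "real \<Rightarrow> real"
  assumes "\<And>y. x \<le> y \<Longrightarrow> y \<le> z \<Longrightarrow> (f has_real_derivative Df y) (at y)"
    and "\<And>y. x \<le> y \<Longrightarrow> y \<le> z \<Longrightarrow> k \<le> Df y" and "x \<le> z"
  shows "f x + k * (z - x) \<le> f z"
proof -
  have "f x - k * x \<le> f z - k * z"
  proof (rule DERIV_nonneg_imp_nondecreasing[OF \<open>x \<le> z\<close>])
    fix y assume "x \<le> y" "y \<le> z"
    with assms(1,2) show "\<exists>d. ((\<lambda>y. f y - k * y) has_real_derivative d) (at y) \<and> 0 \<le> d"
      by (intro exI[of _ "Df y - k"]) (auto intro!: derivative_eq_intros)
  qed
  then show ?thesis by (simp add: algebra_simps)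
qed

lemma DERIV_le_imp_le_linear:
  fixes f Df :: "real \<Rightarrow> real"
  assumes "\<And>y. x \<le> y \<Longrightarrow> y \<le> z \<Longrightarrow> (f has_real_derivative Df y) (at y)"
    and "\<And>y. x \<le> y \<Longrightarrow> y \<le> z \<Longrightarrow> Df y \<le> k" and "x \<le> z"
  shows "f z \<le> f x + k * (z - x)"
proof -
  have "- f x + (- k) * (z - x) \<le> - f z"
    by (rule DERIV_ge_imp_ge_linear) (use assms in \<open>auto intro!: derivative_eq_intros\<close>)
  then show ?thesis by simp
qed

lemma filterlim_at_top_if_DERIV_ge_pos:
  fixes F DF :: "real \<Rightarrow> real"
  assumes "\<And>x. T \<le> x \<Longrightarrow> (F has_real_derivative DF x) (at x)"
    and "\<And>x. T \<le> x \<Longrightarrow> k \<le> DF x" and "0 < k"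
  shows "filterlim F at_top at_top"
proof (rule filterlim_at_top_mono)
  show "filterlim (\<lambda>x. F T + k * (x - T)) at_top at_top"
    using \<open>0 < k\<close> by real_asymp
  show "\<forall>\<^sub>F x in at_top. F T + k * (x - T) \<le> F x"
    using eventually_ge_at_top[of T]
    by eventually_elim (rule DERIV_ge_imp_ge_linear, use assms in auto)
qed

lemma convergent_at_top_if_DERIV_nonneg_bounded:
  fixes V DV :: "real \<Rightarrow> real"
  assumes "\<And>x. T \<le> x \<Longrightarrow> (V has_real_derivative DV x) (at x)"
    and "\<And>x. T \<le> x \<Longrightarrow> 0 \<le> DV x" and "\<And>x. T \<le> x \<Longrightarrow> V x \<le> U"
  shows "\<exists>L. (V \<longlongrightarrow> L) at_top"
proof
  define L where "L = Sup (V ` {T..})"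
  have bdd: "bdd_above (V ` {T..})"
    using assms(3) by (intro bdd_aboveI[of _ U]) auto
  have mono: "V x \<le> V y" if "T \<le> x" "x \<le> y" for x y
    using DERIV_ge_imp_ge_linear[of x y V DV 0] that assms(1,2) by force
  have le_L: "V x \<le> L" if "T \<le> x" for x
    unfolding L_def using bdd that by (intro cSup_upper) auto
  show "(V \<longlongrightarrow> L) at_top"
  proof (rule tendstoI)
    fix e :: real assume "0 < e"
    then obtain x0 where x0: "T \<le> x0" "L - e < V x0"
      using less_cSupD[of "V ` {T..}" "L - e"] bdd unfolding L_def by auto
    show "\<forall>\<^sub>F x in at_top. dist (V x) L < e"
      using eventually_ge_at_top[of x0]
    proof eventually_elim
      case (elim x)
      then show ?case using mono[of x0 x] le_L[of x] x0 \<open>0 < e\<close> by (auto simp: dist_real_def)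
    qed
  qed
qed

lemma DERIV_pos_at_level_imp_stays_above:
  fixes f f' :: "real \<Rightarrow> real"
  assumes der: "\<And>x. start \<le> x \<Longrightarrow> (f has_real_derivative f' x) (at x)"
    and at_level: "\<And>x. start \<le> x \<Longrightarrow> f x = a \<Longrightarrow> 0 < f' x"
    and "a \<le> f start" "start \<le> t"
  shows "a \<le> f t"
proof (rule ccontr)
  assume "\<not> a \<le> f t"
  have cont: "continuous_on {start..t} f"
    using der by (intro continuous_at_imp_continuous_on ballI DERIV_isCont) auto
  define K where "K = {start..t} \<inter> f -` {a..}"
  have "closed K"
    unfolding K_def by (rule continuous_closed_preimage[OF cont]) auto
  moreover have "K \<noteq> {}" "bdd_above K"
    using assms(3,4) unfolding K_def by auto
  ultimately have "Sup K \<in> K" by (rule closed_contains_Sup[rotated -1])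
  then obtain s where s: "s = Sup K" "start \<le> s" "s \<le> t" "a \<le> f s"
    unfolding K_def by auto
  have below: "f x < a" if "s < x" "x \<le> t" for x
    using cSup_upper[of x K] \<open>bdd_above K\<close> that s unfolding K_def by force
  have "f s = a"
  proof -
    obtain x where "s \<le> x" "x \<le> t" "f x = a"
      using IVT2'[of f t a s] s \<open>\<not> a \<le> f t\<close> continuous_on_subset[OF cont, of "{s..t}"] by auto
    with below show ?thesis by (cases "x = s") force+
  qed
  then obtain d where d: "0 < d" "\<And>h. 0 < h \<Longrightarrow> h < d \<Longrightarrow> f s < f (s + h)"
    using DERIV_pos_inc_right[OF der at_level] s by blast
  have "s < t" using s \<open>f s = a\<close> \<open>\<not> a \<le> f t\<close> by (cases "s = t") auto
  define h where "h = min (d / 2) (t - s)"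
  have "0 < h" "h < d" "s + h \<le> t" using d \<open>s < t\<close> unfolding h_def by auto
  then show False using d(2)[of h] below[of "s + h"] \<open>f s = a\<close> by linarith
qed

text \<open>If \<open>f x \<ge> e\<close> at a late time \<open>x\<close>, the derivative bound keeps \<open>f \<ge> e/2\<close> on an interval
  of fixed length \<open>h\<close>, over which \<open>F\<close> drops by at least \<open>e h / 4\<close>; this is impossible once
  \<open>|F| < e h / 8\<close>.\<close>

lemma tendsto_0_by_dissipation:
  fixes F DF f Df g :: "real \<Rightarrow> real"
  assumes dF: "\<And>x. T \<le> x \<Longrightarrow> (F has_real_derivative DF x) (at x)"
    and DF_le: "\<And>x. T \<le> x \<Longrightarrow> DF x \<le> - f x + g x"
    and df: "\<And>x. T \<le> x \<Longrightarrow> (f has_real_derivative Df x) (at x)"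
    and Df_bounded: "\<And>x. T \<le> x \<Longrightarrow> \<bar>Df x\<bar> \<le> B" and "0 < B"
    and f_nonneg: "\<And>x. T \<le> x \<Longrightarrow> 0 \<le> f x"
    and "(F \<longlongrightarrow> 0) at_top" "(g \<longlongrightarrow> 0) at_top"
  shows "(f \<longlongrightarrow> 0) at_top"
proof (rule tendstoI)
  fix e :: real assume "0 < e"
  define h where "h = e / (2 * B)"
  have "0 < h" "B * h = e / 2"
    using \<open>0 < e\<close> \<open>0 < B\<close> unfolding h_def by auto
  have "\<forall>\<^sub>F x in at_top. \<bar>F x\<bar> < e * h / 8 \<and> \<bar>g x\<bar> < e / 4 \<and> T \<le> x"
    using order_tendstoD(2)[OF tendsto_norm_zero[OF \<open>(F \<longlongrightarrow> 0) at_top\<close>], of "e * h / 8"]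
      order_tendstoD(2)[OF tendsto_norm_zero[OF \<open>(g \<longlongrightarrow> 0) at_top\<close>], of "e / 4"]
      eventually_ge_at_top[of T] \<open>0 < e\<close> \<open>0 < h\<close>
    by (auto simp: eventually_conj_iff)
  then obtain N where N: "\<And>x. N \<le> x \<Longrightarrow> \<bar>F x\<bar> < e * h / 8 \<and> \<bar>g x\<bar> < e / 4 \<and> T \<le> x"
    unfolding eventually_at_top_linorder by blast
  have "dist (f x) 0 < e" if "N \<le> x" for x
  proof (rule ccontr)
    assume "\<not> dist (f x) 0 < e"
    then have "e \<le> f x" using f_nonneg[of x] N[OF \<open>N \<le> x\<close>] by auto
    have f_large: "e / 2 \<le> f y" if "x \<le> y" "y \<le> x + h" for y
    proof -
      have "f x + (- B) * (y - x) \<le> f y"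
      proof (rule DERIV_ge_imp_ge_linear[of x y f Df])
        fix w assume "x \<le> w" "w \<le> y"
        with N[of w] \<open>N \<le> x\<close> df[of w] Df_bounded[of w]
        show "(f has_real_derivative Df w) (at w)" "- B \<le> Df w" by (auto simp: abs_le_iff)
      qed (use that in simp)
      moreover have "B * (y - x) \<le> B * h" using that \<open>0 < B\<close> by simp
      ultimately show ?thesis using \<open>e \<le> f x\<close> \<open>B * h = e / 2\<close> by linarith
    qed
    have "F (x + h) \<le> F x + (- (e / 4)) * (x + h - x)"
    proof (rule DERIV_le_imp_le_linear[of x "x + h" F DF])
      fix y assume "x \<le> y" "y \<le> x + h"
      with N[of y] \<open>N \<le> x\<close> f_large[of y] DF_le[of y] dF[of y]
      show "(F has_real_derivative DF y) (at y)" "DF y \<le> - (e / 4)" by force+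
    qed (use \<open>0 < h\<close> in auto)
    with N[of x] N[of "x + h"] \<open>N \<le> x\<close> \<open>0 < h\<close> show False by auto
  qed
  then show "\<forall>\<^sub>F x in at_top. dist (f x) 0 < e"
    unfolding eventually_at_top_linorder by blast
qed

lemma eventually_below_or_above_band:
  fixes f f' :: "real \<Rightarrow> real"
  assumes der: "\<And>x. T \<le> x \<Longrightarrow> (f has_real_derivative f' x) (at x)"
    and band: "\<And>x. T \<le> x \<Longrightarrow> lo \<le> f x \<Longrightarrow> f x \<le> hi \<Longrightarrow> c \<le> f' x"
    and "0 < c" "lo \<le> hi"
  shows "(\<forall>\<^sub>F x in at_top. f x < lo) \<or> (\<forall>\<^sub>F x in at_top. hi \<le> f x)"
proof (cases "\<exists>t1\<ge>T. lo \<le> f t1")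
  case False
  then have "\<forall>\<^sub>F x in at_top. f x < lo"
    unfolding eventually_at_top_linorder by (intro exI[of _ T]) (auto simp: not_le dest: leD)
  then show ?thesis ..
next
  case True
  then obtain t1 where "T \<le> t1" "lo \<le> f t1" by blast
  have stays_above: "a \<le> f t" if "t0 \<le> t" "T \<le> t0" "a \<le> f t0" "lo \<le> a" "a \<le> hi" for a t0 t
  proof (rule DERIV_pos_at_level_imp_stays_above[where f = f and f' = f' and start = t0])
    fix x assume "t0 \<le> x"
    with that(2) show "(f has_real_derivative f' x) (at x)" by (intro der) simp
    assume "f x = a"
    with band[of x] \<open>t0 \<le> x\<close> that(2,4,5) \<open>0 < c\<close> show "0 < f' x" by simp
  qed (use that in simp_all)
  have "\<exists>t2\<ge>t1. hi \<le> f t2"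
  proof (rule ccontr)
    assume "\<not> (\<exists>t2\<ge>t1. hi \<le> f t2)"
    then have below_hi: "f t < hi" if "t1 \<le> t" for t
      using that by (auto simp: not_le dest: leD)
    define t2 where "t2 = t1 + (hi - lo) / c + 1"
    have "f t1 + c * (t2 - t1) \<le> f t2"
    proof (rule DERIV_ge_imp_ge_linear)
      fix y assume "t1 \<le> y" "y \<le> t2"
      with der band[of y] below_hi[of y] stays_above[of t1 y lo] \<open>T \<le> t1\<close> \<open>lo \<le> f t1\<close> \<open>lo \<le> hi\<close>
      show "(f has_real_derivative f' y) (at y)" "c \<le> f' y" by auto
    qed (use \<open>0 < c\<close> \<open>lo \<le> hi\<close> in \<open>simp add: t2_def\<close>)
    moreover have "c * (t2 - t1) = hi - lo + c" using \<open>0 < c\<close> unfolding t2_def by (simp add: field_simps)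
    moreover have "t1 \<le> t2" using \<open>0 < c\<close> \<open>lo \<le> hi\<close> unfolding t2_def by simp
    ultimately show False using below_hi[of t2] \<open>lo \<le> f t1\<close> \<open>0 < c\<close> by linarith
  qed
  then obtain t2 where "t1 \<le> t2" "hi \<le> f t2" by blast
  have "\<forall>\<^sub>F x in at_top. hi \<le> f x"
    unfolding eventually_at_top_linorder
    using stays_above[of t2 _ hi] \<open>T \<le> t1\<close> \<open>t1 \<le> t2\<close> \<open>hi \<le> f t2\<close> \<open>lo \<le> hi\<close> by (intro exI[of _ t2]) auto
  then show ?thesis ..
qed

locale VII0_orbit =
  fixes Sp R1 R2 M psi v :: "real \<Rightarrow> real" and \<tau>0 :: real
  assumes dSp: "\<And>t. t \<ge> \<tau>0 \<Longrightarrow> (Sp has_real_derivative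
      (-(1 - (Sp t)^2) * Sp t - R1 t + (1 + Sp t) * R2 t * cos (2 * psi t)
       - 4 * Omg (Sp t) (R1 t) * (v t)^2 / (3 + (v t)^2))) (at t within {\<tau>0..})"
    and dR1: "\<And>t. t \<ge> \<tau>0 \<Longrightarrow> (R1 has_real_derivative
      (2 * ((1 + Sp t) * Sp t + R2 t * cos (2 * psi t)) * R1 t
       - 2 * (1 + Sp t) * cos (2 * psi t) * R2 t)) (at t within {\<tau>0..})"
    and dR2: "\<And>t. t \<ge> \<tau>0 \<Longrightarrow> (R2 has_real_derivative
      (2 * ((1 + Sp t) * Sp t + R2 t * cos (2 * psi t)) * R2 t
       - 2 * (1 + Sp t) * cos (2 * psi t) * R1 t)) (at t within {\<tau>0..})"
    and dM: "\<And>t. t \<ge> \<tau>0 \<Longrightarrow> (M has_real_derivative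
      (-((1 + Sp t)^2 + R2 t * cos (2 * psi t) + 3 * R2 t * M t * sin (2 * psi t)) * M t))
      (at t within {\<tau>0..})"
    and dpsi: "\<And>t. t \<ge> \<tau>0 \<Longrightarrow> (psi has_real_derivative
      (2 / M t + (1 + Sp t) * (R1 t / R2 t) * sin (2 * psi t))) (at t within {\<tau>0..})"
    and dv: "\<And>t. t \<ge> \<tau>0 \<Longrightarrow> (v has_real_derivative
      (6 / (3 - (v t)^2) * Sp t * (1 - (v t)^2) * v t)) (at t within {\<tau>0..})"
    and constr: "\<And>t. t \<ge> \<tau>0 \<Longrightarrow>
      (R1 t)^2 - (R2 t)^2 - (4 * Omg (Sp t) (R1 t) * v t / (3 + (v t)^2))^2 = 0"
    and vbd: "\<And>t. t \<ge> \<tau>0 \<Longrightarrow> -1 < v t \<and> v t < 1"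
    and Opos: "\<And>t. t \<ge> \<tau>0 \<Longrightarrow> Omg (Sp t) (R1 t) > 0"
    and R1pos: "\<And>t. t \<ge> \<tau>0 \<Longrightarrow> R1 t > 0"
    and R2pos: "\<And>t. t \<ge> \<tau>0 \<Longrightarrow> R2 t > 0"
    and Mnz: "\<And>t. t \<ge> \<tau>0 \<Longrightarrow> M t \<noteq> 0"
    and Mlim: "filterlim M (at_right 0) at_top"
begin

definition "Om t = 1 - (Sp t)^2 - R1 t"
definition "X t = R2 t * cos (2 * psi t)"
definition "Y t = R2 t * sin (2 * psi t)"

definition "DSp t = - (1 - (Sp t)^2) * Sp t - R1 t + (1 + Sp t) * X t
  - 4 * Om t * (v t)^2 / (3 + (v t)^2)"
definition "DR1 t = 2 * ((1 + Sp t) * Sp t + X t) * R1 t - 2 * (1 + Sp t) * X t"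
definition "DR2 t = 2 * ((1 + Sp t) * Sp t + X t) * R2 t - 2 * (1 + Sp t) * cos (2 * psi t) * R1 t"
definition "DM t = - ((1 + Sp t)^2 + X t + 3 * M t * Y t) * M t"
definition "Dpsi t = 2 / M t + (1 + Sp t) * (R1 t / R2 t) * sin (2 * psi t)"
definition "Dv t = 6 / (3 - (v t)^2) * Sp t * (1 - (v t)^2) * v t"

lemma at_within_eq_at: "\<tau>0 < t \<Longrightarrow> at t within {\<tau>0..} = at t"
  by (rule at_within_interior) simp

lemma DERIV_Sp: "(Sp has_real_derivative DSp t) (at t)" if "\<tau>0 < t"
  by (rule DERIV_cong[OF dSp[of t, unfolded at_within_eq_at[OF that]]])
    (use that in \<open>auto simp: DSp_def X_def Om_def Omg_def algebra_simps\<close>)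

lemma DERIV_R1: "(R1 has_real_derivative DR1 t) (at t)" if "\<tau>0 < t"
  by (rule DERIV_cong[OF dR1[of t, unfolded at_within_eq_at[OF that]]])
    (use that in \<open>auto simp: DR1_def X_def algebra_simps\<close>)

lemma DERIV_R2: "(R2 has_real_derivative DR2 t) (at t)" if "\<tau>0 < t"
  by (rule DERIV_cong[OF dR2[of t, unfolded at_within_eq_at[OF that]]])
    (use that in \<open>auto simp: DR2_def X_def algebra_simps\<close>)

lemma DERIV_M: "(M has_real_derivative DM t) (at t)" if "\<tau>0 < t"
  by (rule DERIV_cong[OF dM[of t, unfolded at_within_eq_at[OF that]]])
    (use that in \<open>auto simp: DM_def X_def Y_def algebra_simps\<close>)

lemma DERIV_psi: "(psi has_real_derivative Dpsi t) (at t)" if "\<tau>0 < t"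
  by (rule DERIV_cong[OF dpsi[of t, unfolded at_within_eq_at[OF that]]])
    (use that in \<open>auto simp: Dpsi_def\<close>)

lemma DERIV_v: "(v has_real_derivative Dv t) (at t)" if "\<tau>0 < t"
  by (rule DERIV_cong[OF dv[of t, unfolded at_within_eq_at[OF that]]])
    (use that in \<open>auto simp: Dv_def\<close>)

lemma Om_pos: "\<tau>0 \<le> t \<Longrightarrow> 0 < Om t"
  using Opos[of t] unfolding Om_def Omg_def by simp

lemma R1_lt_1_minus_Sp_sq: "\<tau>0 \<le> t \<Longrightarrow> R1 t < 1 - (Sp t)^2"
  using Om_pos[of t] unfolding Om_def by simp

lemma Sp_sq_lt_1: "\<tau>0 \<le> t \<Longrightarrow> (Sp t)^2 < 1"
  using R1_lt_1_minus_Sp_sq[of t] R1pos[of t] by simp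

lemma abs_Sp_lt_1: "\<tau>0 \<le> t \<Longrightarrow> \<bar>Sp t\<bar> < 1"
  using Sp_sq_lt_1 by (simp add: abs_square_less_1)

lemma R1_lt_1: "\<tau>0 \<le> t \<Longrightarrow> R1 t < 1"
  using R1_lt_1_minus_Sp_sq[of t] by (smt (verit) zero_le_power2)

lemma Om_le_1: "\<tau>0 \<le> t \<Longrightarrow> Om t \<le> 1"
  using R1pos[of t] unfolding Om_def by (smt (verit) zero_le_power2)

lemma v_sq_lt_1: "\<tau>0 \<le> t \<Longrightarrow> (v t)^2 < 1"
  using vbd[of t] by (simp add: abs_square_less_1 abs_less_iff)

lemma R2_le_R1: "R2 t \<le> R1 t" if "\<tau>0 \<le> t"
proof -
  have "(R2 t)^2 \<le> (R1 t)^2"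
    using constr[of t] that by (smt (verit) zero_le_power2)
  then show ?thesis
    using R1pos[of t] R2pos[of t] that by (simp add: power2_le_iff_abs_le)
qed

lemma abs_X_le_R2: "\<tau>0 \<le> t \<Longrightarrow> \<bar>X t\<bar> \<le> R2 t"
  using R2pos[of t] unfolding X_def by (simp add: abs_mult mult_left_le)

lemma abs_Y_le_R2: "\<tau>0 \<le> t \<Longrightarrow> \<bar>Y t\<bar> \<le> R2 t"
  using R2pos[of t] unfolding Y_def by (simp add: abs_mult mult_left_le)

lemma abs_X_le_R1: "\<tau>0 \<le> t \<Longrightarrow> \<bar>X t\<bar> \<le> R1 t"
  using abs_X_le_R2 R2_le_R1 by force

lemma abs_Y_le_R1: "\<tau>0 \<le> t \<Longrightarrow> \<bar>Y t\<bar> \<le> R1 t"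
  using abs_Y_le_R2 R2_le_R1 by force

lemma M_pos: assumes "\<tau>0 \<le> t" shows "0 < M t"
proof (rule ccontr)
  assume "\<not> 0 < M t"
  then have "M t < 0" using Mnz[OF assms] by simp
  have "\<forall>\<^sub>F s in at_top. 0 < M s \<and> t \<le> s"
    using Mlim eventually_ge_at_top[of t] by (auto simp: filterlim_at eventually_conj_iff)
  then obtain s where "0 < M s" "t \<le> s"
    unfolding eventually_at_top_linorder by auto
  moreover have "continuous_on {\<tau>0..} M"
    unfolding continuous_on_eq_continuous_within using dM by (blast intro: DERIV_continuous)
  then have "continuous_on {t..s} M"
    by (rule continuous_on_subset) (use assms in auto)
  ultimately obtain x where "t \<le> x" "x \<le> s" "M x = 0"
    using IVT'[of M t 0 s] \<open>M t < 0\<close> by auto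
  then show False using Mnz[of x] assms by simp
qed

lemma M_tendsto_0: "(M \<longlongrightarrow> 0) at_top"
  using Mlim unfolding filterlim_at by simp

lemma eventually_M_le: "0 < e \<Longrightarrow> \<forall>\<^sub>F t in at_top. M t \<le> e"
  using Mlim unfolding filterlim_at by (auto dest: order_tendstoD(2) intro: eventually_mono)

definition "p t = X t / R1 t"
definition "q t = Y t / R1 t"
definition "rate_MY t = 1 - (Sp t)^2 - X t + 3 * M t * Y t"
definition "rate_Mq t = (1 + Sp t)^2 + X t + 3 * M t * Y t - 2 * (1 + Sp t) * p t"

lemma DERIV_X:
  "(X has_real_derivative 2 * ((1 + Sp t) * Sp t + X t) * X t - 2 * (1 + Sp t) * R1 t - 4 * Y t / M t) (at t)"
  if "\<tau>0 < t"
proof -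
  define c s where "c = cos (2 * psi t)" and "s = sin (2 * psi t)"
  have "R2 t \<noteq> 0" "M t \<noteq> 0" using R2pos[of t] M_pos[of t] that by auto
  have "((\<lambda>t. R2 t * cos (2 * psi t)) has_real_derivative DR2 t * c - R2 t * (s * (2 * Dpsi t))) (at t)"
    unfolding c_def s_def by (auto intro!: derivative_eq_intros DERIV_R2 DERIV_psi that)
  moreover have "DR2 t * c - R2 t * (s * (2 * Dpsi t))
      = 2 * ((1 + Sp t) * Sp t + X t) * X t - 2 * (1 + Sp t) * R1 t * (c^2 + s^2) - 4 * Y t / M t"
    using \<open>R2 t \<noteq> 0\<close> \<open>M t \<noteq> 0\<close>
    unfolding DR2_def Dpsi_def X_def Y_def c_def[symmetric] s_def[symmetric]
    by (simp add: field_simps power2_eq_square)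
  moreover have "c^2 + s^2 = 1" unfolding c_def s_def by simp
  ultimately show ?thesis unfolding X_def[abs_def] by simp
qed

lemma DERIV_Y:
  "(Y has_real_derivative 2 * ((1 + Sp t) * Sp t + X t) * Y t + 4 * X t / M t) (at t)"
  if "\<tau>0 < t"
proof -
  have "R2 t \<noteq> 0" "M t \<noteq> 0" using R2pos[of t] M_pos[of t] that by auto
  have "((\<lambda>t. R2 t * sin (2 * psi t)) has_real_derivative
      DR2 t * sin (2 * psi t) + R2 t * (cos (2 * psi t) * (2 * Dpsi t))) (at t)"
    by (auto intro!: derivative_eq_intros DERIV_R2 DERIV_psi that)
  then show ?thesis
    unfolding Y_def[abs_def]
    by (rule DERIV_cong) (use \<open>R2 t \<noteq> 0\<close> \<open>M t \<noteq> 0\<close> in \<open>simp add: DR2_def Dpsi_def X_def field_simps\<close>)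
qed

lemma DERIV_p:
  "(p has_real_derivative - 2 * (1 + Sp t) + 2 * (1 + Sp t) * (p t)^2 - 4 * q t / M t) (at t)"
  if "\<tau>0 < t"
proof -
  have "R1 t \<noteq> 0" "M t \<noteq> 0" using R1pos[of t] M_pos[of t] that by auto
  then show ?thesis
    unfolding p_def[abs_def]
    by (intro DERIV_cong[OF DERIV_divide[OF DERIV_X[OF that] DERIV_R1[OF that]]])
      (simp_all add: DR1_def p_def q_def field_simps power2_eq_square)
qed

lemma DERIV_q:
  "(q has_real_derivative 4 * p t / M t + 2 * (1 + Sp t) * p t * q t) (at t)"
  if "\<tau>0 < t"
proof -
  have "R1 t \<noteq> 0" "M t \<noteq> 0" using R1pos[of t] M_pos[of t] that by auto
  then show ?thesis
    unfolding q_def[abs_def]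
    by (intro DERIV_cong[OF DERIV_divide[OF DERIV_Y[OF that] DERIV_R1[OF that]]])
      (simp_all add: DR1_def p_def field_simps)
qed

lemma DERIV_M_Y:
  "((\<lambda>t. M t * Y t) has_real_derivative 4 * X t - M t * Y t * rate_MY t) (at t)"
  if "\<tau>0 < t"
  by (rule DERIV_cong[OF DERIV_mult[OF DERIV_M[OF that] DERIV_Y[OF that]]])
    (use M_pos[of t] that in \<open>simp add: DM_def rate_MY_def field_simps power2_eq_square\<close>)

lemma DERIV_M_q:
  "((\<lambda>t. M t * q t) has_real_derivative 4 * p t - M t * q t * rate_Mq t) (at t)"
  if "\<tau>0 < t"
  by (rule DERIV_cong[OF DERIV_mult[OF DERIV_M[OF that] DERIV_q[OF that]]])
    (use M_pos[of t] that in \<open>simp add: DM_def rate_Mq_def field_simps power2_eq_square\<close>)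

definition "lnPhi t = ln (Om t) + ln (1 - (v t)^2) / 3 - ln (3 + (v t)^2)"

lemma DERIV_Om:
  "(Om has_real_derivative 2 * Om t * ((Sp t)^2 + X t + 4 * Sp t * (v t)^2 / (3 + (v t)^2))) (at t)"
  if "\<tau>0 < t"
proof -
  have "0 < 3 + (v t)^2" by (simp add: add_pos_nonneg)
  have "((\<lambda>t. 1 - (Sp t)^2 - R1 t) has_real_derivative - (2 * Sp t * DSp t) - DR1 t) (at t)"
    by (auto intro!: derivative_eq_intros DERIV_Sp DERIV_R1 that)
  then show ?thesis
    unfolding Om_def[abs_def]
    by (rule DERIV_cong)
      (use \<open>0 < 3 + (v t)^2\<close> in \<open>simp add: DSp_def DR1_def Om_def field_simps, algebra\<close>)
qed

lemma DERIV_lnPhi: "(lnPhi has_real_derivative 2 * (Sp t)^2 + 2 * X t) (at t)" if "\<tau>0 < t"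
proof -
  define a b c where "a = 1 - (v t)^2" and "b = 3 + (v t)^2" and "c = 3 - (v t)^2"
  have "0 < Om t" "0 < a" "0 < b" "0 < c"
    using Om_pos[of t] v_sq_lt_1[of t] that unfolding a_def b_def c_def by (auto simp: add_pos_nonneg)
  have "((\<lambda>t. ln (Om t)) has_real_derivative 2 * ((Sp t)^2 + X t + 4 * Sp t * (v t)^2 / b)) (at t)"
    using \<open>0 < Om t\<close> unfolding b_def by (auto intro!: derivative_eq_intros DERIV_Om that)
  moreover have "((\<lambda>t. ln (1 - (v t)^2)) has_real_derivative - (2 * v t * Dv t) / a) (at t)"
    "((\<lambda>t. ln (3 + (v t)^2)) has_real_derivative 2 * v t * Dv t / b) (at t)"
    using \<open>0 < a\<close> \<open>0 < b\<close> unfolding a_def b_def by (auto intro!: derivative_eq_intros DERIV_v that)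
  ultimately have D: "(lnPhi has_real_derivative
      2 * ((Sp t)^2 + X t + 4 * Sp t * (v t)^2 / b) + - (2 * v t * Dv t) / a / 3 - 2 * v t * Dv t / b) (at t)"
    unfolding lnPhi_def[abs_def] by (intro derivative_intros DERIV_cdivide)
  have E: "2 * ((Sp t)^2 + X t + 4 * Sp t * (v t)^2 / b) + - (2 * v t * Dv t) / a / 3
      - 2 * v t * Dv t / b = 2 * (Sp t)^2 + 2 * X t + 4 * Sp t * (v t)^2 * (2 * c - (b + 3 * a)) / (c * b)"
    using \<open>0 < a\<close> \<open>0 < b\<close> \<open>0 < c\<close> unfolding Dv_def a_def[symmetric] c_def[symmetric]
    by (simp add: field_simps power2_eq_square)
  have "2 * c - (b + 3 * a) = 0" unfolding a_def b_def c_def by simp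
  with D show ?thesis unfolding E by simp
qed

lemma DERIV_ln_R1:
  "((\<lambda>t. ln (R1 t)) has_real_derivative 2 * ((1 + Sp t) * Sp t + X t) - 2 * (1 + Sp t) * p t) (at t)"
  if "\<tau>0 < t"
proof -
  have "0 < R1 t" using R1pos[of t] that by simp
  then have "((\<lambda>t. ln (R1 t)) has_real_derivative DR1 t / R1 t) (at t)"
    by (auto intro!: derivative_eq_intros DERIV_R1 that)
  then show ?thesis
    by (rule DERIV_cong) (use \<open>0 < R1 t\<close> in \<open>simp add: DR1_def p_def field_simps\<close>)
qed

lemma DERIV_ln_M:
  "((\<lambda>t. ln (M t)) has_real_derivative - ((1 + Sp t)^2 + X t + 3 * M t * Y t)) (at t)"
  if "\<tau>0 < t"
proof -
  have "0 < M t" using M_pos[of t] that by simp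
  then have "((\<lambda>t. ln (M t)) has_real_derivative DM t / M t) (at t)"
    by (auto intro!: derivative_eq_intros DERIV_M that)
  then show ?thesis
    by (rule DERIV_cong) (use \<open>0 < M t\<close> in \<open>simp add: DM_def\<close>)
qed

text \<open>\<open>Lam a \<approx> ln (R1 / M\<^sup>a)\<close>; the correction \<open>Lam_corr\<close> absorbs the rapidly oscillating part of
  the derivative, leaving the error \<open>Lam_err = O(M)\<close>.\<close>

definition "Lam_corr a t = (1 + Sp t) * (M t * q t) / 2 - (2 + a) * (M t * Y t) / 4"
definition "Lam a t = ln (R1 t) - a * ln (M t) + Lam_corr a t"
definition "Lam_err a t = 3 * a * (M t * Y t) + (2 + a) * (M t * Y t) * rate_MY t / 4
  + DSp t * (M t * q t) / 2 - (1 + Sp t) * (M t * q t) * rate_Mq t / 2"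

lemma DERIV_Lam:
  "(Lam a has_real_derivative 2 * (1 + Sp t) * Sp t + a * (1 + Sp t)^2 + Lam_err a t) (at t)"
  if "\<tau>0 < t"
proof -
  have "((\<lambda>t. (1 + Sp t) * (M t * q t)) has_real_derivative
      DSp t * (M t * q t) + (4 * p t - M t * q t * rate_Mq t) * (1 + Sp t)) (at t)"
    using DERIV_mult[OF DERIV_add[OF DERIV_const DERIV_Sp[OF that]] DERIV_M_q[OF that]] by simp
  then have "(Lam a has_real_derivative
      (2 * ((1 + Sp t) * Sp t + X t) - 2 * (1 + Sp t) * p t) - a * (- ((1 + Sp t)^2 + X t + 3 * M t * Y t))
      + ((DSp t * (M t * q t) + (4 * p t - M t * q t * rate_Mq t) * (1 + Sp t)) / 2
         - (2 + a) * (4 * X t - M t * Y t * rate_MY t) / 4)) (at t)"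
    unfolding Lam_def[abs_def] Lam_corr_def
    by (intro DERIV_add DERIV_diff DERIV_cdivide DERIV_cmult DERIV_ln_R1 DERIV_ln_M DERIV_M_Y that)
  then show ?thesis
    by (rule DERIV_cong) (simp add: Lam_err_def field_simps power2_eq_square)
qed

lemma abs_p_le_1: "\<tau>0 \<le> t \<Longrightarrow> \<bar>p t\<bar> \<le> 1"
  using abs_X_le_R1[of t] R1pos[of t] unfolding p_def by (simp add: abs_divide divide_le_eq)

lemma abs_q_le_1: "\<tau>0 \<le> t \<Longrightarrow> \<bar>q t\<bar> \<le> 1"
  using abs_Y_le_R1[of t] R1pos[of t] unfolding q_def by (simp add: abs_divide divide_le_eq)

lemma abs_M_Y_le: "\<tau>0 \<le> t \<Longrightarrow> \<bar>M t * Y t\<bar> \<le> M t * R1 t"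
  using abs_mult_le[of "M t" "M t" "Y t" "R1 t"] abs_Y_le_R1[of t] M_pos[of t] by simp

lemma abs_M_Y_le_M: "\<tau>0 \<le> t \<Longrightarrow> \<bar>M t * Y t\<bar> \<le> M t"
  using abs_M_Y_le[of t] R1_lt_1[of t] M_pos[of t] by (smt (verit) mult_left_le)

lemma abs_M_q_le_M: "\<tau>0 \<le> t \<Longrightarrow> \<bar>M t * q t\<bar> \<le> M t"
  using abs_mult_le[of "M t" "M t" "q t" 1] abs_q_le_1[of t] M_pos[of t] by simp

lemma abs_rate_MY_le:
  assumes "\<tau>0 \<le> t" "M t \<le> 1/3"
  shows "\<bar>rate_MY t\<bar> \<le> 3 * (1 - (Sp t)^2)"
proof -
  have "\<bar>X t\<bar> \<le> 1 - (Sp t)^2" "\<bar>Y t\<bar> \<le> 1 - (Sp t)^2"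
    using abs_X_le_R1 abs_Y_le_R1 R1_lt_1_minus_Sp_sq assms(1) by force+
  moreover from this(2) have "\<bar>3 * M t * Y t\<bar> \<le> 1 * (1 - (Sp t)^2)"
    by (intro abs_mult_le) (use M_pos[OF assms(1)] assms(2) in auto)
  moreover have "0 \<le> 1 - (Sp t)^2" using Sp_sq_lt_1[OF assms(1)] by simp
  ultimately show ?thesis unfolding rate_MY_def abs_le_iff by argo
qed

lemma abs_rate_Mq_le:
  assumes "\<tau>0 \<le> t" "M t \<le> 1/3"
  shows "\<bar>rate_Mq t\<bar> \<le> 10"
proof -
  have "\<bar>1 + Sp t\<bar> \<le> 2" using abs_Sp_lt_1[OF assms(1)] by simp
  then have "(1 + Sp t)^2 \<le> 4"
    using abs_le_square_iff[of "1 + Sp t" 2] by simp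
  have "\<bar>2 * (1 + Sp t) * p t\<bar> \<le> 4 * 1"
    by (rule abs_mult_le) (use \<open>\<bar>1 + Sp t\<bar> \<le> 2\<close> abs_p_le_1[OF assms(1)] in auto)
  moreover have "\<bar>X t\<bar> \<le> 1" "\<bar>Y t\<bar> \<le> 1"
    using abs_X_le_R1 abs_Y_le_R1 R1_lt_1 assms(1) by force+
  moreover have "\<bar>3 * M t * Y t\<bar> \<le> 1 * 1"
    using abs_mult_le[of "3 * M t" 1 "Y t" 1] \<open>\<bar>Y t\<bar> \<le> 1\<close> M_pos[OF assms(1)] assms(2) by simp
  ultimately show ?thesis
    using \<open>(1 + Sp t)^2 \<le> 4\<close> zero_le_power2[of "1 + Sp t"] unfolding rate_Mq_def abs_le_iff by argo
qed

lemma DSp_eq: "DSp t = - ((1 + Sp t)^2 * (1 - Sp t)) + 3 * Om t * (1 - (v t)^2) / (3 + (v t)^2) + (1 + Sp t) * X t"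
proof -
  have "0 < 3 + (v t)^2" by (simp add: add_pos_nonneg)
  then have "4 * Om t * (v t)^2 / (3 + (v t)^2) = Om t - 3 * Om t * (1 - (v t)^2) / (3 + (v t)^2)"
    by (simp add: field_simps)
  then show ?thesis unfolding DSp_def by (simp add: Om_def power2_eq_square algebra_simps)
qed

lemma tilt_term_bounds:
  assumes "\<tau>0 \<le> t"
  shows "0 \<le> 3 * Om t * (1 - (v t)^2) / (3 + (v t)^2)" "3 * Om t * (1 - (v t)^2) / (3 + (v t)^2) \<le> Om t"
  using Om_pos[OF assms] v_sq_lt_1[OF assms] by (simp_all add: divide_le_eq add_pos_nonneg)

lemma abs_DSp_le: "\<bar>DSp t\<bar> \<le> 5 * (1 - (Sp t)^2)" if "\<tau>0 \<le> t"
proof -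
  have "\<bar>Sp t\<bar> < 1" using abs_Sp_lt_1[OF that] .
  then have "(1 + Sp t)^2 * (1 - Sp t) = (1 + Sp t) * (1 - (Sp t)^2)" "0 \<le> 1 + Sp t" "1 + Sp t \<le> 2"
    by (auto simp: power2_eq_square algebra_simps)
  moreover have "0 < 1 - (Sp t)^2" using Sp_sq_lt_1[OF that] by simp
  ultimately have "0 \<le> (1 + Sp t)^2 * (1 - Sp t)" "(1 + Sp t)^2 * (1 - Sp t) \<le> 2 * (1 - (Sp t)^2)"
    using mult_right_mono[of "1 + Sp t" 2 "1 - (Sp t)^2"] by simp_all
  moreover have "\<bar>(1 + Sp t) * X t\<bar> \<le> 2 * (1 - (Sp t)^2)"
    using abs_mult_le[of "1 + Sp t" 2 "X t" "1 - (Sp t)^2"] \<open>\<bar>Sp t\<bar> < 1\<close> abs_X_le_R1[OF that]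
      R1_lt_1_minus_Sp_sq[OF that] by simp
  moreover have "Om t \<le> 1 - (Sp t)^2" using R1pos[OF that] unfolding Om_def by simp
  ultimately show ?thesis
    using tilt_term_bounds[OF that] unfolding DSp_eq abs_le_iff by argo
qed

lemma abs_DSp_le_vanishing: "\<bar>DSp t\<bar> \<le> \<bar>Sp t\<bar> + 3 * R1 t + 4 * (v t)^2" if "\<tau>0 \<le> t"
proof -
  have "\<bar>(1 - (Sp t)^2) * Sp t\<bar> \<le> 1 * \<bar>Sp t\<bar>"
    by (rule abs_mult_le) (use Sp_sq_lt_1[OF that] in auto)
  moreover have "\<bar>(1 + Sp t) * X t\<bar> \<le> 2 * R1 t"
    by (rule abs_mult_le) (use abs_Sp_lt_1[OF that] abs_X_le_R1[OF that] in auto)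
  moreover have "Om t * (v t)^2 \<le> (3 + (v t)^2) * (v t)^2"
    using Om_le_1[OF that] zero_le_power2[of "v t"] by (intro mult_right_mono) linarith+
  then have "0 \<le> 4 * Om t * (v t)^2 / (3 + (v t)^2)" "4 * Om t * (v t)^2 / (3 + (v t)^2) \<le> 4 * (v t)^2"
    using Om_pos[OF that] by (simp_all add: divide_le_eq add_pos_nonneg mult.commute)
  ultimately show ?thesis
    using R1pos[OF that] unfolding DSp_def abs_le_iff by argo
qed

lemma one_plus_Sp_le:
  assumes "\<tau>0 \<le> t" "Sp t \<le> m" "m < 1"
  shows "1 + Sp t \<le> (1 - (Sp t)^2) / (1 - m)"
proof -
  have "(1 + Sp t) * (1 - m) \<le> (1 + Sp t) * (1 - Sp t)"
    using abs_Sp_lt_1[OF assms(1)] assms(2) by (intro mult_left_mono) auto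
  then show ?thesis using assms(3) by (simp add: le_divide_eq power2_eq_square algebra_simps)
qed

lemma abs_Lam_err_le:
  assumes t: "\<tau>0 \<le> t" "M t \<le> 1/3" and m: "Sp t \<le> m" "m < 1" and a: "\<bar>a\<bar> \<le> 2"
  shows "\<bar>Lam_err a t\<bar> \<le> (12 + 5 / (1 - m)) * M t * (1 - (Sp t)^2)"
proof -
  define w where "w = 1 - (Sp t)^2"
  define u k where "u = M t * w" and "k = 5 / (1 - m)"
  have "0 < M t" "0 < w" "R1 t \<le> w"
    using M_pos Sp_sq_lt_1 R1_lt_1_minus_Sp_sq t unfolding w_def by force+
  then have "0 \<le> u" unfolding u_def by simp
  have MY: "\<bar>M t * Y t\<bar> \<le> M t * w"
    by (rule order_trans[OF abs_M_Y_le[OF t(1)]]) (use \<open>R1 t \<le> w\<close> \<open>0 < M t\<close> in simp)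
  have "\<bar>3 * a * (M t * Y t)\<bar> \<le> 6 * u"
    using abs_mult_le[OF _ MY, of "3 * a" 6] a unfolding u_def by simp
  moreover have "\<bar>(2 + a) * (M t * Y t)\<bar> \<le> 4 * M t"
    by (rule abs_mult_le) (use a abs_M_Y_le_M[OF t(1)] in auto)
  then have "\<bar>(2 + a) * (M t * Y t) * rate_MY t\<bar> \<le> (4 * M t) * (3 * w)"
    using abs_rate_MY_le[OF t] unfolding w_def by (rule abs_mult_le)
  then have "\<bar>(2 + a) * (M t * Y t) * rate_MY t\<bar> \<le> 12 * u"
    unfolding u_def by simp
  moreover have "\<bar>DSp t * (M t * q t)\<bar> \<le> (5 * w) * M t"
    using abs_DSp_le[OF t(1)] abs_M_q_le_M[OF t(1)] unfolding w_def by (rule abs_mult_le)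
  then have "\<bar>DSp t * (M t * q t)\<bar> \<le> 5 * u"
    unfolding u_def by (simp add: mult_ac)
  moreover have "\<bar>(1 + Sp t) * (M t * q t) * rate_Mq t\<bar> \<le> 2 * (k * u)"
    using abs_mult_le[OF abs_mult_le[OF _ abs_M_q_le_M[OF t(1)], of "1 + Sp t" "w / (1 - m)"] abs_rate_Mq_le[OF t]]
      one_plus_Sp_le[OF t(1) m] abs_Sp_lt_1[OF t(1)] unfolding u_def k_def w_def by (simp add: mult_ac)
  ultimately have "\<bar>Lam_err a t\<bar> \<le> 12 * u + k * u"
    using \<open>0 \<le> u\<close> unfolding Lam_err_def abs_le_iff by linarith
  also have "12 * u + k * u = (12 + k) * M t * w"
    unfolding u_def by (simp add: distrib_right mult.assoc)
  finally show ?thesis unfolding k_def w_def .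
qed

lemma abs_Lam_corr_le: "\<bar>Lam_corr a t\<bar> \<le> 2 * M t" if "\<tau>0 \<le> t" "\<bar>a\<bar> \<le> 2"
proof -
  have "\<bar>(1 + Sp t) * (M t * q t)\<bar> \<le> 2 * M t"
    by (rule abs_mult_le) (use abs_Sp_lt_1[OF that(1)] abs_M_q_le_M[OF that(1)] in auto)
  moreover have "\<bar>(2 + a) * (M t * Y t)\<bar> \<le> 4 * M t"
    by (rule abs_mult_le) (use abs_M_Y_le_M that in auto)
  ultimately show ?thesis unfolding Lam_corr_def by (simp add: abs_le_iff)
qed

lemma ln_R1_over_M_le_Lam:
  "ln (R1 t) - a * ln (M t) - 2 * M t \<le> Lam a t" if "\<tau>0 \<le> t" "\<bar>a\<bar> \<le> 2"
  using abs_Lam_corr_le[OF that] unfolding Lam_def by (simp add: abs_le_iff)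

lemma Lam_le_ln_R1_over_M:
  "Lam a t \<le> ln (R1 t) - a * ln (M t) + 2 * M t" if "\<tau>0 \<le> t" "\<bar>a\<bar> \<le> 2"
  using abs_Lam_corr_le[OF that] unfolding Lam_def by (simp add: abs_le_iff)

lemma exp_Lam_minus_1_ge: "M t * R1 t / 2 \<le> exp (Lam (-1) t)" if "\<tau>0 \<le> t" "M t \<le> 1/4"
proof -
  have "0 < M t" "0 < R1 t" using M_pos R1pos that by auto
  have "1 / 2 \<le> exp (- 2 * M t)"
    using exp_ge_add_one_self[of "- 2 * M t"] that(2) by linarith
  also have "\<dots> \<le> exp (Lam (-1) t - ln (R1 t) - ln (M t))"
    using ln_R1_over_M_le_Lam[OF that(1), of "-1"] by simp
  finally show ?thesis
    using \<open>0 < M t\<close> \<open>0 < R1 t\<close> by (simp add: exp_diff mult.commute)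
qed

section \<open>Decay of \<open>Sp\<close>\<close>

lemma eventually_Sp_le: obtains m where "0 < m" "m < 1" "\<forall>\<^sub>F t in at_top. Sp t \<le> m"
proof -
  define m where "m = (1 + max (Sp (\<tau>0 + 1)) 0) / 2"
  have m: "0 < m" "m < 1" "Sp (\<tau>0 + 1) \<le> m"
    using abs_Sp_lt_1[of "\<tau>0 + 1"] unfolding m_def by auto
  txt \<open>On the level \<open>Sp = m\<close> we have \<open>Sp' < 0\<close>, because \<open>Om + R1 = 1 - m\<^sup>2\<close>.\<close>
  have "- m \<le> - Sp t" if "\<tau>0 + 1 \<le> t" for t
  proof (rule DERIV_pos_at_level_imp_stays_above[where f = "\<lambda>t. - Sp t" and f' = "\<lambda>t. - DSp t"])
    fix x assume "\<tau>0 + 1 \<le> x"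
    then show "((\<lambda>t. - Sp t) has_real_derivative - DSp x) (at x)"
      by (auto intro!: derivative_eq_intros DERIV_Sp)
    assume "- Sp x = - m"
    have x: "\<tau>0 \<le> x" using \<open>\<tau>0 + 1 \<le> x\<close> by simp
    have "(1 + m) * X x \<le> (1 + m) * R1 x"
      using abs_X_le_R1[OF x] m by (intro mult_left_mono) auto
    moreover have "Om x < (1 + m) * Om x" using Om_pos[OF x] m by simp
    moreover have "- ((1 + m)^2 * (1 - m)) + (1 + m) * (Om x + R1 x) = 0"
      using \<open>- Sp x = - m\<close> unfolding Om_def by (simp add: power2_eq_square algebra_simps)
    ultimately show "0 < - DSp x"
      using tilt_term_bounds[OF x] \<open>- Sp x = - m\<close> unfolding DSp_eq by (simp add: algebra_simps)
  qed (use m that in auto)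
  then have "\<forall>\<^sub>F t in at_top. Sp t \<le> m"
    unfolding eventually_at_top_linorder by (intro exI[of _ "\<tau>0 + 1"]) auto
  with m that show ?thesis by blast
qed

text \<open>The Lyapunov function for \<open>Sp\<close>: \<open>- M Y / 2\<close> cancels the term \<open>2 X\<close> of \<open>lnPhi'\<close>, and
  \<open>- 8 exp (Lam (-1)) \<approx> - 8 M R1\<close> dominates the remaining errors of size \<open>M R1\<close>.\<close>

definition "lyap t = lnPhi t - M t * Y t / 2 - 8 * exp (Lam (-1) t)"

definition "Dlyap t = 2 * (Sp t)^2 + M t * Y t * rate_MY t / 2
  + 8 * exp (Lam (-1) t) * (1 - (Sp t)^2 - Lam_err (-1) t)"

lemma DERIV_lyap: "(lyap has_real_derivative Dlyap t) (at t)" if "\<tau>0 < t"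
proof -
  have "(lyap has_real_derivative (2 * (Sp t)^2 + 2 * X t) - (4 * X t - M t * Y t * rate_MY t) / 2
      - 8 * (exp (Lam (-1) t) * (2 * (1 + Sp t) * Sp t + -1 * (1 + Sp t)^2 + Lam_err (-1) t))) (at t)"
    unfolding lyap_def[abs_def]
    by (intro DERIV_diff DERIV_cdivide DERIV_cmult DERIV_fun_exp DERIV_lnPhi DERIV_M_Y DERIV_Lam that)
  then show ?thesis
    by (rule DERIV_cong) (simp add: Dlyap_def power2_eq_square field_simps)
qed

lemma lnPhi_le_0: "lnPhi t \<le> 0" if "\<tau>0 \<le> t"
proof -
  have "ln (Om t) \<le> 0" using Om_pos[OF that] Om_le_1[OF that] by simp
  moreover have "ln (1 - (v t)^2) \<le> 0" using v_sq_lt_1[OF that] by simp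
  moreover have "0 \<le> ln (3 + (v t)^2)" by (simp add: add_increasing)
  ultimately show ?thesis unfolding lnPhi_def by linarith
qed

lemma lyap_le: "lyap t \<le> 1/2" if "\<tau>0 \<le> t" "M t \<le> 1"
  using lnPhi_le_0[OF that(1)] abs_M_Y_le_M[OF that(1)] that(2) unfolding lyap_def
  by (simp add: abs_le_iff) (smt (verit) exp_gt_zero)

lemma Dlyap_ge:
  assumes t: "\<tau>0 \<le> t" and m: "Sp t \<le> m" "m < 1" and M_small: "(12 + 5 / (1 - m)) * M t \<le> 1/2"
  shows "2 * (Sp t)^2 \<le> Dlyap t"
proof -
  define w H where "w = 1 - (Sp t)^2" and "H = exp (Lam (-1) t)"
  have "0 < w" "0 < M t" "0 < H" using Sp_sq_lt_1 M_pos t unfolding w_def H_def by auto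
  have "12 * M t \<le> (12 + 5 / (1 - m)) * M t"
    using m \<open>0 < M t\<close> by (intro mult_right_mono) auto
  then have "M t \<le> 1/24" "M t \<le> 1/3" using M_small by linarith+
  have "\<bar>M t * Y t * rate_MY t\<bar> \<le> (M t * R1 t) * (3 * w)"
    using abs_mult_le[OF abs_M_Y_le abs_rate_MY_le] t \<open>M t \<le> 1/3\<close> unfolding w_def by blast
  also have "\<dots> \<le> (2 * H) * (3 * w)"
    using exp_Lam_minus_1_ge[OF t] \<open>M t \<le> 1/24\<close> \<open>0 < w\<close> unfolding H_def by (intro mult_right_mono) auto
  finally have "- 3 * (H * w) \<le> M t * Y t * rate_MY t / 2" by (simp add: abs_le_iff)
  moreover have "Lam_err (-1) t \<le> w / 2"
  proof -
    have "Lam_err (-1) t \<le> ((12 + 5 / (1 - m)) * M t) * w"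
      using abs_Lam_err_le[OF t \<open>M t \<le> 1/3\<close> m, of "-1"] unfolding w_def by (simp add: abs_le_iff)
    also have "\<dots> \<le> (1/2) * w" using M_small \<open>0 < w\<close> by (intro mult_right_mono) auto
    finally show ?thesis by simp
  qed
  then have "4 * (H * w) \<le> 8 * H * (w - Lam_err (-1) t)"
    using \<open>0 < H\<close> by (simp add: algebra_simps)
  ultimately show ?thesis
    using \<open>0 < H\<close> \<open>0 < w\<close> unfolding Dlyap_def H_def[symmetric] w_def[symmetric]
    by (smt (verit) mult_pos_pos)
qed

lemma eventually_lyap_bounds:
  "\<forall>\<^sub>F t in at_top. \<tau>0 < t \<and> 2 * (Sp t)^2 \<le> Dlyap t \<and> lyap t \<le> 1/2"
proof -
  obtain m where m: "0 < m" "m < 1" "\<forall>\<^sub>F t in at_top. Sp t \<le> m" by (rule eventually_Sp_le)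
  define C where "C = 12 + 5 / (1 - m)"
  have "0 < C" using m unfolding C_def by (simp add: add_pos_pos)
  have "\<forall>\<^sub>F t in at_top. M t \<le> 1 / (2 * C)" "\<forall>\<^sub>F t in at_top. M t \<le> 1"
    using eventually_M_le \<open>0 < C\<close> by simp_all
  with m(3) show ?thesis
    using eventually_gt_at_top[of \<tau>0]
  proof eventually_elim
    case (elim t)
    then have "C * M t \<le> 1/2" using \<open>0 < C\<close> by (simp add: field_simps)
    with elim show ?case using Dlyap_ge[of t m] lyap_le[of t] m unfolding C_def by auto
  qed
qed

lemma Sp_tendsto_0: "(Sp \<longlongrightarrow> 0) at_top"
proof -
  obtain T where T: "\<And>t. T \<le> t \<Longrightarrow> \<tau>0 < t \<and> 2 * (Sp t)^2 \<le> Dlyap t \<and> lyap t \<le> 1/2"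
    using eventually_lyap_bounds unfolding eventually_at_top_linorder by blast
  have "\<exists>L. (lyap \<longlongrightarrow> L) at_top"
  proof (rule convergent_at_top_if_DERIV_nonneg_bounded)
    fix t assume "T \<le> t"
    with T[of t] show "(lyap has_real_derivative Dlyap t) (at t)" "0 \<le> Dlyap t" "lyap t \<le> 1/2"
      using DERIV_lyap[of t] zero_le_power2[of "Sp t"] by (auto intro: order_trans[rotated])
  qed
  then obtain L where "(lyap \<longlongrightarrow> L) at_top" by blast
  have "((\<lambda>t. 2 * (Sp t)^2) \<longlongrightarrow> 0) at_top"
  proof (rule tendsto_0_by_dissipation[where F = "\<lambda>t. L - lyap t" and DF = "\<lambda>t. - Dlyap t"
        and g = "\<lambda>t. 0" and Df = "\<lambda>t. 4 * Sp t * DSp t" and B = 20 and T = T])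
    fix x assume "T \<le> x"
    then have "\<tau>0 < x" "2 * (Sp x)^2 \<le> Dlyap x" using T by auto
    then show "((\<lambda>t. L - lyap t) has_real_derivative - Dlyap x) (at x)"
      "((\<lambda>t. 2 * (Sp t)^2) has_real_derivative 4 * Sp x * DSp x) (at x)"
      "- Dlyap x \<le> - (2 * (Sp x)^2) + 0"
      using DERIV_lyap DERIV_Sp by (auto intro!: derivative_eq_intros)
    have "\<bar>Sp x\<bar> \<le> 1" "\<bar>DSp x\<bar> \<le> 5"
      using abs_Sp_lt_1[of x] abs_DSp_le[of x] \<open>\<tau>0 < x\<close> by (smt (verit) zero_le_power2)+
    then have "\<bar>Sp x * DSp x\<bar> \<le> 1 * 5" by (rule abs_mult_le)
    then show "\<bar>4 * Sp x * DSp x\<bar> \<le> 20" by (simp add: abs_mult)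
  qed (use \<open>(lyap \<longlongrightarrow> L) at_top\<close> in \<open>auto intro!: tendsto_eq_intros\<close>)
  then have "((\<lambda>t. (Sp t)^2) \<longlongrightarrow> 0) at_top"
    using tendsto_mult_left[of _ 0 at_top "1/2"] by force
  then show ?thesis by simp
qed

section \<open>Decay of \<open>R1\<close>, \<open>R2\<close> and \<open>v\<close>\<close>

lemma abs_DR1_le: "\<bar>DR1 t\<bar> \<le> 10" if "\<tau>0 \<le> t"
proof -
  have "\<bar>Sp t\<bar> < 1" "\<bar>X t\<bar> \<le> 1" "0 < R1 t" "R1 t < 1"
    using abs_Sp_lt_1 abs_X_le_R1 R1_lt_1 R1pos that by force+
  have "\<bar>(1 + Sp t) * Sp t\<bar> \<le> 2 * 1"
    by (rule abs_mult_le) (use \<open>\<bar>Sp t\<bar> < 1\<close> in auto)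
  then have "\<bar>((1 + Sp t) * Sp t + X t) * R1 t\<bar> \<le> 3 * 1"
    by (intro abs_mult_le) (use \<open>\<bar>X t\<bar> \<le> 1\<close> \<open>0 < R1 t\<close> \<open>R1 t < 1\<close> in auto)
  moreover have "\<bar>(1 + Sp t) * X t\<bar> \<le> 2 * 1"
    by (rule abs_mult_le) (use \<open>\<bar>Sp t\<bar> < 1\<close> \<open>\<bar>X t\<bar> \<le> 1\<close> in auto)
  ultimately show ?thesis unfolding DR1_def by (simp add: abs_le_iff) argo
qed

text \<open>\<open>Sp\<close> with the oscillating part \<open>(1 + Sp) X\<close> of its derivative removed.\<close>

definition "avg_Sp t = Sp t - (1 + Sp t) * (M t * Y t) / 4"

definition "Davg_Sp t = DSp t - (DSp t * (M t * Y t) + (1 + Sp t) * (4 * X t - M t * Y t * rate_MY t)) / 4"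

lemma DERIV_avg_Sp: "(avg_Sp has_real_derivative Davg_Sp t) (at t)" if "\<tau>0 < t"
  unfolding avg_Sp_def[abs_def]
  by (rule DERIV_cong[OF DERIV_diff[OF DERIV_Sp DERIV_cdivide[OF DERIV_mult[OF DERIV_add[OF DERIV_const DERIV_Sp] DERIV_M_Y]]]])
    (use that in \<open>auto simp: Davg_Sp_def algebra_simps\<close>)

lemma Davg_Sp_le: "Davg_Sp t \<le> - R1 t + (\<bar>Sp t\<bar> + 3 * M t)" if "\<tau>0 \<le> t" "M t \<le> 1/3"
proof -
  have "Davg_Sp t = (DSp t - (1 + Sp t) * X t)
      - DSp t * (M t * Y t) / 4 + (1 + Sp t) * (M t * Y t) * rate_MY t / 4"
    unfolding Davg_Sp_def by (simp add: field_simps)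
  moreover have "DSp t - (1 + Sp t) * X t
      = - ((1 - (Sp t)^2) * Sp t) - R1 t - 4 * Om t * (v t)^2 / (3 + (v t)^2)"
    unfolding DSp_def by (simp add: algebra_simps)
  moreover have "\<bar>(1 - (Sp t)^2) * Sp t\<bar> \<le> 1 * \<bar>Sp t\<bar>"
    by (rule abs_mult_le) (use Sp_sq_lt_1[OF that(1)] in auto)
  moreover have "0 \<le> 4 * Om t * (v t)^2 / (3 + (v t)^2)"
    using Om_pos[OF that(1)] by (simp add: add_pos_nonneg)
  moreover have "\<bar>DSp t * (M t * Y t)\<bar> \<le> (5 * (1 - (Sp t)^2)) * M t"
    by (rule abs_mult_le[OF abs_DSp_le[OF that(1)] abs_M_Y_le_M[OF that(1)]])
  moreover have "(5 * (1 - (Sp t)^2)) * M t \<le> 5 * M t"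
    using M_pos[OF that(1)] by (intro mult_right_mono) auto
  moreover have "\<bar>(1 + Sp t) * (M t * Y t)\<bar> \<le> 2 * M t"
    by (rule abs_mult_le) (use abs_Sp_lt_1[OF that(1)] abs_M_Y_le_M[OF that(1)] in auto)
  then have "\<bar>(1 + Sp t) * (M t * Y t) * rate_MY t\<bar> \<le> (2 * M t) * (3 * (1 - (Sp t)^2))"
    by (rule abs_mult_le[OF _ abs_rate_MY_le[OF that]])
  moreover have "(2 * M t) * (3 * (1 - (Sp t)^2)) \<le> 6 * M t"
    using M_pos[OF that(1)] by (simp add: mult_right_le_one_le)
  ultimately show ?thesis unfolding abs_le_iff by argo
qed

lemma M_Y_tendsto_0: "((\<lambda>t. M t * Y t) \<longlongrightarrow> 0) at_top"
proof (rule Lim_null_comparison[OF _ M_tendsto_0])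
  show "\<forall>\<^sub>F t in at_top. norm (M t * Y t) \<le> M t"
    using eventually_ge_at_top[of \<tau>0] by eventually_elim (simp add: abs_M_Y_le_M)
qed

lemma R1_tendsto_0: "(R1 \<longlongrightarrow> 0) at_top"
proof -
  obtain T where T: "\<And>t. T \<le> t \<Longrightarrow> \<tau>0 < t \<and> M t \<le> 1/3"
    using eventually_conj[OF eventually_gt_at_top[of \<tau>0] eventually_M_le[of "1/3"]]
    unfolding eventually_at_top_linorder by auto
  show ?thesis
  proof (rule tendsto_0_by_dissipation[where F = avg_Sp and DF = Davg_Sp and g = "\<lambda>t. \<bar>Sp t\<bar> + 3 * M t"
        and Df = DR1 and B = 10 and T = T])
    fix x assume "T \<le> x"
    then have "\<tau>0 < x" "M x \<le> 1/3" using T by auto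
    then show "(avg_Sp has_real_derivative Davg_Sp x) (at x)" "(R1 has_real_derivative DR1 x) (at x)"
      "Davg_Sp x \<le> - R1 x + (\<bar>Sp x\<bar> + 3 * M x)" "\<bar>DR1 x\<bar> \<le> 10" "0 \<le> R1 x"
      using DERIV_avg_Sp DERIV_R1 Davg_Sp_le abs_DR1_le R1pos by (auto simp: less_imp_le)
  next
    show "(avg_Sp \<longlongrightarrow> 0) at_top"
      unfolding avg_Sp_def[abs_def]
      using tendsto_diff[OF Sp_tendsto_0
          tendsto_divide[OF tendsto_mult[OF tendsto_add[OF tendsto_const Sp_tendsto_0] M_Y_tendsto_0] tendsto_const]]
      by simp
    show "((\<lambda>t. \<bar>Sp t\<bar> + 3 * M t) \<longlongrightarrow> 0) at_top"
      using Sp_tendsto_0 M_tendsto_0 by (auto intro!: tendsto_eq_intros)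
  qed simp
qed

lemma R2_tendsto_0: "(R2 \<longlongrightarrow> 0) at_top"
proof (rule Lim_null_comparison[OF _ R1_tendsto_0])
  show "\<forall>\<^sub>F t in at_top. norm (R2 t) \<le> R1 t"
    using eventually_ge_at_top[of \<tau>0] by eventually_elim (use R2_le_R1 R2pos in force)
qed

lemma Om_tendsto_1: "(Om \<longlongrightarrow> 1) at_top"
  unfolding Om_def[abs_def] using Sp_tendsto_0 R1_tendsto_0 by (auto intro!: tendsto_eq_intros)

lemma abs_v_le: "\<bar>v t\<bar> \<le> R1 t / Om t" if "\<tau>0 \<le> t"
proof -
  have "0 < 3 + (v t)^2" "(v t)^2 < 1" "0 < Om t" using v_sq_lt_1 Om_pos that by (auto simp: add_pos_nonneg)
  define K where "K = 4 * Om t * v t / (3 + (v t)^2)"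
  have "K^2 \<le> (R1 t)^2"
    using constr[OF that] unfolding K_def Omg_def Om_def by (smt (verit) zero_le_power2)
  then have "\<bar>K\<bar> \<le> R1 t" using R1pos[OF that] by (simp add: power2_le_iff_abs_le)
  have "\<bar>4 * Om t * v t\<bar> = \<bar>K\<bar> * (3 + (v t)^2)"
    unfolding K_def using \<open>0 < 3 + (v t)^2\<close> by (simp add: abs_mult abs_divide)
  also have "\<dots> \<le> R1 t * 4"
    using \<open>\<bar>K\<bar> \<le> R1 t\<close> \<open>(v t)^2 < 1\<close> by (intro mult_mono) auto
  finally show ?thesis using \<open>0 < Om t\<close> by (simp add: abs_mult le_divide_eq mult.commute)
qed

lemma v_tendsto_0: "(v \<longlongrightarrow> 0) at_top"
proof (rule Lim_null_comparison)
  show "\<forall>\<^sub>F t in at_top. norm (v t) \<le> R1 t / Om t"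
    using eventually_ge_at_top[of \<tau>0] by eventually_elim (simp add: abs_v_le)
  show "((\<lambda>t. R1 t / Om t) \<longlongrightarrow> 0) at_top"
    using tendsto_divide[OF R1_tendsto_0 Om_tendsto_1] by simp
qed

section \<open>Growth of \<open>R1 / M\<^sup>k\<close>\<close>

lemma DLam_ge:
  assumes a: "1 \<le> a" "a \<le> 2" and t: "\<tau>0 \<le> t" "\<bar>Sp t\<bar> \<le> 1/32" "M t \<le> 1/80"
  shows "1/2 \<le> 2 * (1 + Sp t) * Sp t + a * (1 + Sp t)^2 + Lam_err a t"
proof -
  have "0 < M t" using M_pos[OF t(1)] .
  have "\<bar>(1 + Sp t) * Sp t\<bar> \<le> 2 * \<bar>Sp t\<bar>"
    by (rule abs_mult_le) (use t(2) in auto)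
  moreover have "a * (1 + 2 * Sp t) \<le> a * (1 + Sp t)^2"
    using a by (intro mult_left_mono) (auto simp: power2_eq_square algebra_simps)
  moreover have "\<bar>a * (2 * Sp t)\<bar> \<le> 2 * (2 * \<bar>Sp t\<bar>)"
    by (rule abs_mult_le) (use a in auto)
  moreover have "\<bar>Lam_err a t\<bar> \<le> (12 + 5 / (1 - 1/32)) * M t * (1 - (Sp t)^2)"
    by (rule abs_Lam_err_le) (use a t in auto)
  moreover have "(12 + 5 / (1 - 1/32)) * M t * (1 - (Sp t)^2) \<le> 1/4"
  proof -
    have "(12 + 5 / (1 - 1/32)) * M t * (1 - (Sp t)^2) \<le> 18 * M t * 1"
      using \<open>0 < M t\<close> Sp_sq_lt_1[OF t(1)] by (intro mult_mono) auto
    then show ?thesis using t(3) by simp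
  qed
  ultimately show ?thesis
    using a t(2) unfolding abs_le_iff by (simp add: algebra_simps) argo
qed

lemma R1_over_M_power_tendsto_infinity:
  assumes "1 \<le> k" "k \<le> 2"
  shows "filterlim (\<lambda>t. R1 t / (M t)^k) at_top at_top"
proof -
  have "\<forall>\<^sub>F t in at_top. \<bar>Sp t\<bar> < 1/32"
    using order_tendstoD(2)[OF tendsto_norm_zero[OF Sp_tendsto_0], of "1/32"] by simp
  moreover have "\<forall>\<^sub>F t in at_top. M t \<le> 1/80" by (rule eventually_M_le) simp
  ultimately have "\<forall>\<^sub>F t in at_top. \<tau>0 < t \<and> \<bar>Sp t\<bar> \<le> 1/32 \<and> M t \<le> 1/80"
    using eventually_gt_at_top[of \<tau>0] by eventually_elim auto
  then obtain T where T: "\<And>t. T \<le> t \<Longrightarrow> \<tau>0 < t \<and> \<bar>Sp t\<bar> \<le> 1/32 \<and> M t \<le> 1/80"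
    unfolding eventually_at_top_linorder by blast
  have "filterlim (\<lambda>t. Lam (real k) t - 1) at_top at_top"
  proof (rule filterlim_at_top_if_DERIV_ge_pos)
    fix t assume "T \<le> t"
    then show "((\<lambda>t. Lam (real k) t - 1) has_real_derivative
        2 * (1 + Sp t) * Sp t + real k * (1 + Sp t)^2 + Lam_err (real k) t) (at t)"
      "1/2 \<le> 2 * (1 + Sp t) * Sp t + real k * (1 + Sp t)^2 + Lam_err (real k) t"
      using T[of t] DERIV_Lam[of t] DLam_ge[of "real k" t] assms
      by (auto intro!: derivative_eq_intros)
  qed simp
  then have "filterlim (\<lambda>t. exp (Lam (real k) t - 1)) at_top at_top"
    by (rule filterlim_compose[OF exp_at_top])
  moreover have "\<forall>\<^sub>F t in at_top. exp (Lam (real k) t - 1) \<le> R1 t / (M t)^k"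
    using eventually_ge_at_top[of T]
  proof eventually_elim
    case (elim t)
    then have "\<tau>0 \<le> t" "M t \<le> 1/80" using T by force+
    have "Lam (real k) t - 1 \<le> ln (R1 t) - real k * ln (M t)"
      using Lam_le_ln_R1_over_M[OF \<open>\<tau>0 \<le> t\<close>, of "real k"] \<open>M t \<le> 1/80\<close> assms by simp
    also have "\<dots> = ln (R1 t / (M t)^k)"
      using R1pos[OF \<open>\<tau>0 \<le> t\<close>] M_pos[OF \<open>\<tau>0 \<le> t\<close>] by (simp add: ln_div ln_realpow)
    finally have "exp (Lam (real k) t - 1) \<le> exp (ln (R1 t / (M t)^k))" by simp
    then show ?case using R1pos[OF \<open>\<tau>0 \<le> t\<close>] M_pos[OF \<open>\<tau>0 \<le> t\<close>] by simp
  qed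
  ultimately show ?thesis by (rule filterlim_at_top_mono)
qed

section \<open>Growth of \<open>R2 / M\<^sup>2\<close>\<close>

text \<open>By \<open>DERIV_p\<close> and \<open>DERIV_q\<close>, \<open>(p, q)\<close> rotates with angular speed \<open>4 / M\<close> about the
  point \<open>(cp, cq)\<close>, up to higher order terms.\<close>

definition "cp t = (1 + Sp t)^3 * (M t)^2 / 8"
definition "cq t = - ((1 + Sp t) * M t / 2)"
definition "dist_sq t = (p t - cp t)^2 + (q t - cq t)^2"
definition "zeta t = dist_sq t / (M t)^2"

definition "Dcp t = (3 * (1 + Sp t)^2 * DSp t * (M t)^2 + (1 + Sp t)^3 * (2 * M t * DM t)) / 8"
definition "Ddist_sq t = 2 * (p t - cp t) * (2 * (1 + Sp t) * (p t)^2 - Dcp t)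
  + 2 * (q t - cq t) * (2 * (1 + Sp t) * p t * q t + DSp t * M t / 2 - (1 + Sp t) * M t * (X t + 3 * M t * Y t) / 2)"

lemma DERIV_cp: "(cp has_real_derivative Dcp t) (at t)" if "\<tau>0 < t"
  unfolding cp_def[abs_def] Dcp_def
  by (auto intro!: derivative_eq_intros DERIV_Sp DERIV_M that simp: field_simps power2_eq_square power3_eq_cube)

lemma DERIV_dist_sq: "(dist_sq has_real_derivative Ddist_sq t) (at t)" if "\<tau>0 < t"
proof -
  have "M t \<noteq> 0" using M_pos[of t] that by simp
  have dp: "((\<lambda>t. p t - cp t) has_real_derivative
      - 2 * (1 + Sp t) + 2 * (1 + Sp t) * (p t)^2 - 4 * q t / M t - Dcp t) (at t)"
    by (intro DERIV_diff DERIV_p DERIV_cp that)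
  have dq: "((\<lambda>t. q t - cq t) has_real_derivative
      4 * p t / M t + 2 * (1 + Sp t) * p t * q t + (DSp t * M t + (1 + Sp t) * DM t) / 2) (at t)"
    unfolding cq_def using DERIV_q[OF that] DERIV_Sp[OF that] DERIV_M[OF that]
    by (auto intro!: derivative_eq_intros simp: field_simps)
  show ?thesis
    unfolding dist_sq_def[abs_def]
    by (rule DERIV_cong[OF DERIV_add[OF DERIV_power[OF dp, of 2] DERIV_power[OF dq, of 2]]])
      (use \<open>M t \<noteq> 0\<close> in \<open>simp add: Ddist_sq_def cp_def cq_def DM_def field_simps power2_eq_square power3_eq_cube\<close>)
qed

lemma DERIV_zeta:
  "(zeta has_real_derivative Ddist_sq t / (M t)^2 + 2 * zeta t * ((1 + Sp t)^2 + X t + 3 * M t * Y t)) (at t)"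
  if "\<tau>0 < t"
proof -
  have "M t \<noteq> 0" using M_pos[of t] that by simp
  have "(zeta has_real_derivative (Ddist_sq t * (M t)^2 - dist_sq t * (2 * M t * DM t)) / ((M t)^2 * (M t)^2)) (at t)"
    unfolding zeta_def[abs_def] using DERIV_dist_sq[OF that] DERIV_M[OF that] \<open>M t \<noteq> 0\<close>
    by (auto intro!: derivative_eq_intros simp: power2_eq_square)
  then show ?thesis
    by (rule DERIV_cong) (use \<open>M t \<noteq> 0\<close> in \<open>simp add: zeta_def DM_def field_simps power2_eq_square\<close>)
qed

lemma cp_cq_bounds:
  assumes "\<tau>0 \<le> t" "\<bar>Sp t\<bar> \<le> 1/4" "M t \<le> 1"
  shows "0 \<le> cp t" "cp t \<le> (M t)^2 / 4" "cp t \<le> M t / 4" "3/8 * M t \<le> - cq t" "- cq t \<le> 5/8 * M t"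
proof -
  have "0 < M t" using M_pos[OF assms(1)] .
  have "3/4 \<le> 1 + Sp t" "1 + Sp t \<le> 5/4" using assms(2) by (auto simp: abs_le_iff)
  then have "(1 + Sp t)^3 \<le> (5/4)^3" "0 \<le> (1 + Sp t)^3" by (auto intro: power_mono)
  then have "(1 + Sp t)^3 * (M t)^2 \<le> 2 * (M t)^2" "0 \<le> (1 + Sp t)^3 * (M t)^2"
    by (auto intro!: mult_right_mono simp: power3_eq_cube)
  then show "0 \<le> cp t" "cp t \<le> (M t)^2 / 4" unfolding cp_def by (auto simp: mult.commute)
  moreover have "(M t)^2 \<le> M t" using \<open>0 < M t\<close> assms(3) by (simp add: power2_eq_square mult_left_le)
  ultimately show "cp t \<le> M t / 4" by simp
  show "3/8 * M t \<le> - cq t" "- cq t \<le> 5/8 * M t"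
    unfolding cq_def using \<open>3/4 \<le> 1 + Sp t\<close> \<open>1 + Sp t \<le> 5/4\<close> \<open>0 < M t\<close> by auto
qed

lemma near_centre_bounds:
  assumes t: "\<tau>0 \<le> t" "\<bar>Sp t\<bar> \<le> 1/4" "M t \<le> 1" and "zeta t \<le> 4"
  shows "\<bar>p t - cp t\<bar> \<le> 2 * M t" "\<bar>q t - cq t\<bar> \<le> 2 * M t" "\<bar>p t\<bar> \<le> 3 * M t" "\<bar>q t\<bar> \<le> 3 * M t"
proof -
  have "0 < M t" using M_pos[OF t(1)] .
  then have "dist_sq t \<le> (2 * M t)^2"
    using \<open>zeta t \<le> 4\<close> unfolding zeta_def by (simp add: divide_le_eq power_mult_distrib)
  then have "(p t - cp t)^2 \<le> (2 * M t)^2" "(q t - cq t)^2 \<le> (2 * M t)^2"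
    unfolding dist_sq_def by (smt (verit) zero_le_power2)+
  then have "\<bar>p t - cp t\<bar> \<le> \<bar>2 * M t\<bar>" "\<bar>q t - cq t\<bar> \<le> \<bar>2 * M t\<bar>"
    by (simp_all only: abs_le_square_iff)
  then show "\<bar>p t - cp t\<bar> \<le> 2 * M t" "\<bar>q t - cq t\<bar> \<le> 2 * M t"
    using \<open>0 < M t\<close> by simp_all
  then show "\<bar>p t\<bar> \<le> 3 * M t" "\<bar>q t\<bar> \<le> 3 * M t"
    using cp_cq_bounds[OF t] by (simp_all add: abs_le_iff)
qed

lemma abs_DM_le: "\<bar>DM t\<bar> \<le> 4 * M t" if "\<tau>0 \<le> t" "\<bar>Sp t\<bar> \<le> 1/4" "M t \<le> 1/3"
proof -
  have "0 < M t" using M_pos[OF that(1)] .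
  have "\<bar>1 + Sp t\<bar> \<le> 5/4" using that(2) by simp
  then have "(1 + Sp t)^2 \<le> (5/4)^2" by (simp add: abs_le_square_iff[symmetric])
  moreover have "\<bar>X t\<bar> \<le> 1" "\<bar>Y t\<bar> \<le> 1"
    using abs_X_le_R1[OF that(1)] abs_Y_le_R1[OF that(1)] R1_lt_1[OF that(1)] by auto
  moreover have "(5/4::real)^2 \<le> 2" by (simp add: power2_eq_square)
  ultimately have "(1 + Sp t)^2 \<le> 2" "\<bar>X t\<bar> \<le> 1" "\<bar>Y t\<bar> \<le> 1" by linarith+
  then have "\<bar>(1 + Sp t)^2 + X t + 3 * M t * Y t\<bar> \<le> 4"
    using abs_mult_le[of "3 * M t" 1 "Y t" 1] that(3) \<open>0 < M t\<close> zero_le_power2[of "1 + Sp t"]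
    unfolding abs_le_iff by argo
  then show ?thesis
    using abs_mult_le[of "(1 + Sp t)^2 + X t + 3 * M t * Y t" 4 "M t" "M t"] \<open>0 < M t\<close>
    unfolding DM_def by (simp add: abs_mult)
qed

lemma abs_Dcp_le: "\<bar>Dcp t\<bar> \<le> 6 * (M t)^2" if "\<tau>0 \<le> t" "\<bar>Sp t\<bar> \<le> 1/4" "M t \<le> 1/3"
proof -
  have "0 < M t" using M_pos[OF that(1)] .
  have "0 \<le> 1 + Sp t" "1 + Sp t \<le> 5/4" using that(2) by (auto simp: abs_le_iff)
  then have "(1 + Sp t)^2 \<le> 2" "(1 + Sp t)^3 \<le> 2"
    using power_mono[of "1 + Sp t" "5/4" 2] power_mono[of "1 + Sp t" "5/4" 3] by (auto simp: power_divide)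
  have "\<bar>DSp t\<bar> \<le> 5" using abs_DSp_le[OF that(1)] by (smt (verit) zero_le_power2)
  have "\<bar>3 * (1 + Sp t)^2\<bar> \<le> 6" using \<open>(1 + Sp t)^2 \<le> 2\<close> by simp
  then have "\<bar>3 * (1 + Sp t)^2 * DSp t\<bar> \<le> 6 * 5" using \<open>\<bar>DSp t\<bar> \<le> 5\<close> by (rule abs_mult_le)
  then have A: "\<bar>3 * (1 + Sp t)^2 * DSp t * (M t)^2\<bar> \<le> (6 * 5) * (M t)^2" by (rule abs_mult_le) simp
  have "\<bar>2 * M t * DM t\<bar> \<le> (2 * M t) * (4 * M t)"
    by (rule abs_mult_le) (use abs_DM_le[OF that] \<open>0 < M t\<close> in auto)
  then have B: "\<bar>(1 + Sp t)^3 * (2 * M t * DM t)\<bar> \<le> 2 * ((2 * M t) * (4 * M t))"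
    by (rule abs_mult_le[rotated]) (use \<open>(1 + Sp t)^3 \<le> 2\<close> \<open>0 \<le> 1 + Sp t\<close> in simp)
  have "\<bar>Dcp t\<bar> \<le> (\<bar>3 * (1 + Sp t)^2 * DSp t * (M t)^2\<bar> + \<bar>(1 + Sp t)^3 * (2 * M t * DM t)\<bar>) / 8"
    unfolding Dcp_def by (simp add: abs_triangle_ineq divide_right_mono)
  also have "\<dots> \<le> ((6 * 5) * (M t)^2 + 2 * ((2 * M t) * (4 * M t))) / 8"
    using A B by (intro divide_right_mono add_mono) auto
  finally show ?thesis by (simp add: power2_eq_square)
qed

lemma drift_bounds:
  assumes t: "\<tau>0 \<le> t" "\<bar>Sp t\<bar> \<le> 1/4" "M t \<le> 1/3" and "zeta t \<le> 4"
  shows "\<bar>2 * (1 + Sp t) * (p t)^2 - Dcp t\<bar> \<le> 29 * (M t)^2"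
    "\<bar>2 * (1 + Sp t) * p t * q t + DSp t * M t / 2 - (1 + Sp t) * M t * (X t + 3 * M t * Y t) / 2\<bar>
      \<le> 25 * (M t)^2 + M t * \<bar>DSp t\<bar> / 2 + M t * \<bar>X t\<bar>"
proof -
  define m where "m = M t"
  have "0 < m" using M_pos[OF t(1)] unfolding m_def .
  have p: "\<bar>p t\<bar> \<le> 3 * m" and q: "\<bar>q t\<bar> \<le> 3 * m"
    using near_centre_bounds[OF t(1,2) _ \<open>zeta t \<le> 4\<close>] t(3) unfolding m_def by auto
  have S: "\<bar>2 * (1 + Sp t)\<bar> \<le> 5/2" "\<bar>1 + Sp t\<bar> \<le> 5/4" using t(2) by (auto simp: abs_le_iff)
  have "\<bar>(p t)^2\<bar> \<le> 9 * m^2"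
    using power_mono[OF p, of 2] by (simp add: power_abs power_mult_distrib)
  then have "\<bar>2 * (1 + Sp t) * (p t)^2\<bar> \<le> 5/2 * (9 * m^2)"
    by (rule abs_mult_le[OF S(1)])
  with abs_Dcp_le[OF t(1-3)] show "\<bar>2 * (1 + Sp t) * (p t)^2 - Dcp t\<bar> \<le> 29 * (M t)^2"
    unfolding m_def abs_le_iff by linarith
  have "\<bar>2 * (1 + Sp t) * p t * q t\<bar> \<le> (5/2 * (3 * m)) * (3 * m)"
    by (intro abs_mult_le S(1) p q)
  moreover have "(5/2 * (3 * m)) * (3 * m) = 45/2 * m^2" by (simp add: power2_eq_square)
  moreover have "\<bar>X t\<bar> \<le> 1" "\<bar>Y t\<bar> \<le> 1"
    using abs_X_le_R1[OF t(1)] abs_Y_le_R1[OF t(1)] R1_lt_1[OF t(1)] by auto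
  then have "\<bar>3 * M t * Y t\<bar> \<le> (3 * m) * 1"
    by (intro abs_mult_le) (use \<open>0 < m\<close> in \<open>auto simp: m_def\<close>)
  then have "\<bar>X t + 3 * M t * Y t\<bar> \<le> \<bar>X t\<bar> + 3 * m"
    using abs_triangle_ineq[of "X t" "3 * M t * Y t"] by linarith
  then have "\<bar>(1 + Sp t) * M t * (X t + 3 * M t * Y t)\<bar> \<le> (5/4 * m) * (\<bar>X t\<bar> + 3 * m)"
    using abs_mult_le[OF abs_mult_le[OF S(2), of "M t" m]] \<open>0 < m\<close> unfolding m_def by simp
  moreover have "(5/4 * m) * (\<bar>X t\<bar> + 3 * m) = 5/4 * (m * \<bar>X t\<bar>) + 15/4 * m^2"
    by (simp add: algebra_simps power2_eq_square)
  moreover have "\<bar>DSp t * M t / 2\<bar> = m * \<bar>DSp t\<bar> / 2"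
    using \<open>0 < m\<close> unfolding m_def by (simp add: abs_mult)
  moreover have "0 \<le> m * \<bar>X t\<bar>" "0 \<le> m^2" using \<open>0 < m\<close> by auto
  ultimately show "\<bar>2 * (1 + Sp t) * p t * q t + DSp t * M t / 2 - (1 + Sp t) * M t * (X t + 3 * M t * Y t) / 2\<bar>
      \<le> 25 * (M t)^2 + M t * \<bar>DSp t\<bar> / 2 + M t * \<bar>X t\<bar>"
    unfolding m_def[symmetric] abs_le_iff by argo
qed

lemma abs_Ddist_sq_le:
  assumes t: "\<tau>0 \<le> t" "\<bar>Sp t\<bar> \<le> 1/4" "M t \<le> 1/3" and "zeta t \<le> 4"
  shows "\<bar>Ddist_sq t\<bar> \<le> (M t)^2 * (216 * M t + 2 * \<bar>DSp t\<bar> + 4 * \<bar>X t\<bar>)"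
proof -
  have "0 < M t" using M_pos[OF t(1)] .
  note near = near_centre_bounds[OF t(1,2) _ \<open>zeta t \<le> 4\<close>] and drift = drift_bounds[OF assms]
  have "\<bar>2 * (p t - cp t) * (2 * (1 + Sp t) * (p t)^2 - Dcp t)\<bar> \<le> (2 * (2 * M t)) * (29 * (M t)^2)"
    using near(1) t(3) drift(1) by (intro abs_mult_le) (auto simp: abs_mult)
  moreover have "\<bar>2 * (q t - cq t) * (2 * (1 + Sp t) * p t * q t + DSp t * M t / 2
      - (1 + Sp t) * M t * (X t + 3 * M t * Y t) / 2)\<bar>
      \<le> (2 * (2 * M t)) * (25 * (M t)^2 + M t * \<bar>DSp t\<bar> / 2 + M t * \<bar>X t\<bar>)"
    using near(2) t(3) drift(2) by (intro abs_mult_le) (auto simp: abs_mult)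
  ultimately have "\<bar>Ddist_sq t\<bar> \<le> (2 * (2 * M t)) * (29 * (M t)^2)
      + (2 * (2 * M t)) * (25 * (M t)^2 + M t * \<bar>DSp t\<bar> / 2 + M t * \<bar>X t\<bar>)"
    unfolding Ddist_sq_def by (rule order_trans[OF abs_triangle_ineq add_mono])
  also have "\<dots> = (M t)^2 * (216 * M t + 2 * \<bar>DSp t\<bar> + 4 * \<bar>X t\<bar>)"
    by (simp add: algebra_simps power2_eq_square)
  finally show ?thesis .
qed

lemma zeta_increases_in_band:
  assumes t: "\<tau>0 \<le> t" "\<bar>Sp t\<bar> \<le> 1/4" "216 * M t + 2 * \<bar>DSp t\<bar> + 4 * \<bar>X t\<bar> \<le> 1/32"
    and z: "1/16 \<le> zeta t" "zeta t \<le> 4"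
  shows "1/32 \<le> Ddist_sq t / (M t)^2 + 2 * zeta t * ((1 + Sp t)^2 + X t + 3 * M t * Y t)"
proof -
  have "0 < M t" using M_pos[OF t(1)] .
  have "M t \<le> 1/3" "\<bar>X t\<bar> \<le> 1/128"
    using t(3) \<open>0 < M t\<close> abs_ge_zero[of "DSp t"] abs_ge_zero[of "X t"] by linarith+
  have "\<bar>Ddist_sq t\<bar> \<le> (M t)^2 * (1/32)"
    using abs_Ddist_sq_le[OF t(1,2) \<open>M t \<le> 1/3\<close> z(2)] mult_left_mono[OF t(3), of "(M t)^2"] by simp
  then have "\<bar>Ddist_sq t / (M t)^2\<bar> \<le> 1/32"
    using \<open>0 < M t\<close> by (simp add: abs_divide divide_le_eq mult.commute)
  moreover have "9/16 \<le> (1 + Sp t)^2"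
    using power_mono[of "3/4" "1 + Sp t" 2] t(2) by (auto simp: abs_le_iff power2_eq_square)
  moreover have "\<bar>3 * M t * Y t\<bar> \<le> (3 * M t) * 1"
    using abs_Y_le_R1[OF t(1)] R1_lt_1[OF t(1)] \<open>0 < M t\<close> by (intro abs_mult_le) auto
  ultimately have "1/2 \<le> (1 + Sp t)^2 + X t + 3 * M t * Y t" "- (1/32) \<le> Ddist_sq t / (M t)^2"
    using \<open>\<bar>X t\<bar> \<le> 1/128\<close> t(3) \<open>0 < M t\<close> unfolding abs_le_iff by linarith+
  moreover have "2 * (1/16) * (1/2) \<le> 2 * zeta t * ((1 + Sp t)^2 + X t + 3 * M t * Y t)"
    using z(1) calculation(1) by (intro mult_mono) auto
  ultimately show ?thesis by linarith
qed

lemma R1_M_le_8_R2: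
  assumes t: "\<tau>0 \<le> t" "\<bar>Sp t\<bar> \<le> 1/4" "M t \<le> 1" and z: "zeta t < 1/16 \<or> 4 \<le> zeta t"
  shows "R1 t * M t / 8 \<le> R2 t"
proof -
  have "0 < M t" "0 < R1 t" using M_pos R1pos t(1) by auto
  note c = cp_cq_bounds[OF t]
  have "M t / 8 \<le> \<bar>p t\<bar> \<or> M t / 8 \<le> \<bar>q t\<bar>"
    using z
  proof
    assume "zeta t < 1/16"
    then have "dist_sq t < (M t / 4)^2"
      using \<open>0 < M t\<close> unfolding zeta_def by (simp add: divide_less_eq power_divide)
    then have "\<bar>q t - cq t\<bar>^2 < (M t / 4)^2"
      using zero_le_power2[of "p t - cp t"] unfolding dist_sq_def power2_abs by linarith
    then have "\<bar>q t - cq t\<bar> < M t / 4"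
      by (rule power2_less_imp_less) (use \<open>0 < M t\<close> in simp)
    with c(4) show ?thesis by (auto simp: abs_le_iff abs_less_iff)
  next
    assume "4 \<le> zeta t"
    then have "(2 * M t)^2 \<le> dist_sq t"
      using \<open>0 < M t\<close> unfolding zeta_def by (simp add: le_divide_eq power_mult_distrib)
    have "M t \<le> \<bar>p t - cp t\<bar> \<or> M t \<le> \<bar>q t - cq t\<bar>"
    proof (rule ccontr)
      assume "\<not> ?thesis"
      then have "\<bar>p t - cp t\<bar>^2 < (M t)^2" "\<bar>q t - cq t\<bar>^2 < (M t)^2"
        using power_strict_mono[of "\<bar>p t - cp t\<bar>" "M t" 2]
          power_strict_mono[of "\<bar>q t - cq t\<bar>" "M t" 2] by auto
      with \<open>(2 * M t)^2 \<le> dist_sq t\<close> zero_le_power2[of "M t"] show False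
        unfolding dist_sq_def power_mult_distrib power2_abs by simp
    qed
    with c show ?thesis by (auto simp: abs_le_iff)
  qed
  moreover have "R1 t * \<bar>p t\<bar> \<le> R2 t" "R1 t * \<bar>q t\<bar> \<le> R2 t"
    using abs_X_le_R2[OF t(1)] abs_Y_le_R2[OF t(1)] \<open>0 < R1 t\<close> unfolding p_def q_def by (simp_all add: abs_divide)
  ultimately obtain r where r: "M t / 8 \<le> r" "R1 t * r \<le> R2 t" by blast
  have "R1 t * (M t / 8) \<le> R1 t * r" using r(1) \<open>0 < R1 t\<close> by (intro mult_left_mono) auto
  with r(2) show ?thesis by simp
qed

lemma DSp_tendsto_0: "(DSp \<longlongrightarrow> 0) at_top"
proof (rule Lim_null_comparison)
  show "\<forall>\<^sub>F t in at_top. norm (DSp t) \<le> \<bar>Sp t\<bar> + 3 * R1 t + 4 * (v t)^2"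
    using eventually_ge_at_top[of \<tau>0] by eventually_elim (simp add: abs_DSp_le_vanishing)
  have "((\<lambda>t. \<bar>Sp t\<bar> + 3 * R1 t + 4 * (v t)^2) \<longlongrightarrow> \<bar>0\<bar> + 3 * 0 + 4 * 0^2) at_top"
    by (intro tendsto_intros Sp_tendsto_0 R1_tendsto_0 v_tendsto_0)
  then show "((\<lambda>t. \<bar>Sp t\<bar> + 3 * R1 t + 4 * (v t)^2) \<longlongrightarrow> 0) at_top" by simp
qed

lemma X_tendsto_0: "(X \<longlongrightarrow> 0) at_top"
proof (rule Lim_null_comparison[OF _ R1_tendsto_0])
  show "\<forall>\<^sub>F t in at_top. norm (X t) \<le> R1 t"
    using eventually_ge_at_top[of \<tau>0] by eventually_elim (simp add: abs_X_le_R1)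
qed

lemma R2_over_M_sq_tendsto_infinity: "filterlim (\<lambda>t. R2 t / (M t)^2) at_top at_top"
proof -
  have "((\<lambda>t. 216 * M t + 2 * \<bar>DSp t\<bar> + 4 * \<bar>X t\<bar>) \<longlongrightarrow> 216 * 0 + 2 * \<bar>0\<bar> + 4 * \<bar>0\<bar>) at_top"
    by (intro tendsto_intros M_tendsto_0 DSp_tendsto_0 X_tendsto_0)
  then have "\<forall>\<^sub>F t in at_top. 216 * M t + 2 * \<bar>DSp t\<bar> + 4 * \<bar>X t\<bar> < 1/32"
    by (intro order_tendstoD(2)) auto
  moreover have "\<forall>\<^sub>F t in at_top. \<bar>Sp t\<bar> < 1/4"
    using order_tendstoD(2)[OF tendsto_norm_zero[OF Sp_tendsto_0], of "1/4"] by simp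
  moreover have "\<forall>\<^sub>F t in at_top. M t \<le> 1" by (rule eventually_M_le) simp
  ultimately have "\<forall>\<^sub>F t in at_top. \<tau>0 < t \<and> \<bar>Sp t\<bar> \<le> 1/4 \<and> M t \<le> 1
      \<and> 216 * M t + 2 * \<bar>DSp t\<bar> + 4 * \<bar>X t\<bar> \<le> 1/32"
    using eventually_gt_at_top[of \<tau>0] by eventually_elim auto
  then obtain T where T: "\<And>t. T \<le> t \<Longrightarrow> \<tau>0 < t \<and> \<bar>Sp t\<bar> \<le> 1/4 \<and> M t \<le> 1
      \<and> 216 * M t + 2 * \<bar>DSp t\<bar> + 4 * \<bar>X t\<bar> \<le> 1/32"
    unfolding eventually_at_top_linorder by blast
  have "(\<forall>\<^sub>F t in at_top. zeta t < 1/16) \<or> (\<forall>\<^sub>F t in at_top. 4 \<le> zeta t)"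
    by (rule eventually_below_or_above_band[where T = T and c = "1/32"])
      (use T DERIV_zeta zeta_increases_in_band in \<open>auto simp: less_imp_le\<close>)
  then have "\<forall>\<^sub>F t in at_top. zeta t < 1/16 \<or> 4 \<le> zeta t"
    by (auto elim: eventually_mono)
  then have "\<forall>\<^sub>F t in at_top. 1/8 * (R1 t / (M t)^1) \<le> R2 t / (M t)^2"
    using eventually_ge_at_top[of T]
  proof eventually_elim
    case (elim t)
    then have "R1 t * M t / 8 \<le> R2 t" "0 < M t"
      using R1_M_le_8_R2[of t] M_pos[of t] T[of t] by auto
    then show ?case by (simp add: power2_eq_square divide_le_eq_1 field_simps)
  qed
  moreover have "filterlim (\<lambda>t. 1/8 * (R1 t / (M t)^1)) at_top at_top"
    by (intro filterlim_tendsto_pos_mult_at_top[OF tendsto_const] R1_over_M_power_tendsto_infinity) auto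
  ultimately show ?thesis by (rule filterlim_at_top_mono[rotated])
qed

end

theorem theorem1:
  fixes Sp R1 R2 M psi v :: "real \<Rightarrow> real" and \<tau>0 :: real
  assumes dSp: "\<And>t. t \<ge> \<tau>0 \<Longrightarrow> (Sp has_real_derivative
      (-(1 - (Sp t)^2) * Sp t - R1 t + (1 + Sp t) * R2 t * cos (2 * psi t)
       - 4 * Omg (Sp t) (R1 t) * (v t)^2 / (3 + (v t)^2))) (at t within {\<tau>0..})"
    and dR1: "\<And>t. t \<ge> \<tau>0 \<Longrightarrow> (R1 has_real_derivative
      (2 * ((1 + Sp t) * Sp t + R2 t * cos (2 * psi t)) * R1 t
       - 2 * (1 + Sp t) * cos (2 * psi t) * R2 t)) (at t within {\<tau>0..})"
    and dR2: "\<And>t. t \<ge> \<tau>0 \<Longrightarrow> (R2 has_real_derivative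
      (2 * ((1 + Sp t) * Sp t + R2 t * cos (2 * psi t)) * R2 t
       - 2 * (1 + Sp t) * cos (2 * psi t) * R1 t)) (at t within {\<tau>0..})"
    and dM: "\<And>t. t \<ge> \<tau>0 \<Longrightarrow> (M has_real_derivative
      (-((1 + Sp t)^2 + R2 t * cos (2 * psi t) + 3 * R2 t * M t * sin (2 * psi t)) * M t))
      (at t within {\<tau>0..})"
    and dpsi: "\<And>t. t \<ge> \<tau>0 \<Longrightarrow> (psi has_real_derivative
      (2 / M t + (1 + Sp t) * (R1 t / R2 t) * sin (2 * psi t))) (at t within {\<tau>0..})"
    and dv: "\<And>t. t \<ge> \<tau>0 \<Longrightarrow> (v has_real_derivative
      (6 / (3 - (v t)^2) * Sp t * (1 - (v t)^2) * v t)) (at t within {\<tau>0..})"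
    and constr: "\<And>t. t \<ge> \<tau>0 \<Longrightarrow>
      (R1 t)^2 - (R2 t)^2 - (4 * Omg (Sp t) (R1 t) * v t / (3 + (v t)^2))^2 = 0"
    and vbd: "\<And>t. t \<ge> \<tau>0 \<Longrightarrow> -1 < v t \<and> v t < 1"
    and Opos: "\<And>t. t \<ge> \<tau>0 \<Longrightarrow> Omg (Sp t) (R1 t) > 0"
    and R1pos: "\<And>t. t \<ge> \<tau>0 \<Longrightarrow> R1 t > 0"
    and R2pos: "\<And>t. t \<ge> \<tau>0 \<Longrightarrow> R2 t > 0"
    and Mnz: "\<And>t. t \<ge> \<tau>0 \<Longrightarrow> M t \<noteq> 0"
    and Mlim: "filterlim M (at_right 0) at_top"
  shows "(Sp \<longlongrightarrow> 0) at_top \<and> (R1 \<longlongrightarrow> 0) at_top \<and> (R2 \<longlongrightarrow> 0) at_top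
         \<and> (v \<longlongrightarrow> 0) at_top \<and> (M \<longlongrightarrow> 0) at_top
         \<and> filterlim (\<lambda>t. R1 t / (M t)^2) at_top at_top
         \<and> filterlim (\<lambda>t. R2 t / (M t)^2) at_top at_top"
proof -
  interpret VII0_orbit Sp R1 R2 M psi v \<tau>0
    by (rule VII0_orbit.intro[OF dSp dR1 dR2 dM dpsi dv constr vbd Opos R1pos R2pos Mnz Mlim])
  show ?thesis
    using Sp_tendsto_0 R1_tendsto_0 R2_tendsto_0 v_tendsto_0 M_tendsto_0
      R1_over_M_power_tendsto_infinity[of 2] R2_over_M_sq_tendsto_infinity
    by simp
qed

end
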